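(* Let $H\in(\tfrac12,1)$, let $(L_t)_{t\in\mathbb R}$ be a two-sided Lévy process without Gaussian component with $\mathbb E L_1=0$, $\mathbb E L_1^2<\infty$, and let $X_t=\int_{-\infty}^t f_H(t,s)\,dL_s$ be the fLpMvN. Then for all $-\infty<s<t<\infty$, $$\sum_{j=1}^{2^n}\big(X_{s+\frac{j}{2^n}(t-s)}-X_{s+\frac{j-1}{2^n}(t-s)}\big)^2\to0\quad\text{a.s. as }n\to\infty.$$
   Context: A two-sided Lévy process is $L_t=L^{(1)}_t$ for $t\ge0$ and $L_t=-L^{(2)}_{-(t-)}$ for $t<0$, with $L^{(1)},L^{(2)}$ i.i.d. Lévy processes. Mandelbrot–Van Ness kernel: $f_H(t,s)=C_H\big((t-s)_+^{H-1/2}-(-s)_+^{H-1/2}\big)$ with $C_H=\big(\int_0^\infty((1+s)^{H-1/2}-s^{H-1/2})^2ds+\tfrac1{2H}\big)^{-1/2}$. The integral is the $L^2(\mathbb P)$-limit of integrals of step functions. *)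

theory Defs
  imports "HOL-Probability.Probability"
begin

definition cadlag_nonneg :: "(real \<Rightarrow> real) \<Rightarrow> bool" where
  "cadlag_nonneg g \<longleftrightarrow>
     (\<forall>t\<ge>0. continuous (at_right t) g) \<and> (\<forall>t>0. \<exists>l. (g \<longlongrightarrow> l) (at_left t))"

text \<open>(One-sided) Levy process indexed by t >= 0 (values at t < 0 are irrelevant).\<close>
definition levy_process :: "'a measure \<Rightarrow> (real \<Rightarrow> 'a \<Rightarrow> real) \<Rightarrow> bool" where
  "levy_process M L \<longleftrightarrow>
     prob_space M \<and>
     (\<forall>t\<ge>0. L t \<in> borel_measurable M) \<and>
     (AE \<omega> in M. L 0 \<omega> = 0) \<and>
     (\<forall>(n::nat) (\<tau>::nat \<Rightarrow> real). 0 \<le> \<tau> 0 \<and> (\<forall>i<n. \<tau> i < \<tau> (Suc i)) \<longrightarrow>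
        prob_space.indep_vars M (\<lambda>_. borel) (\<lambda>i \<omega>. L (\<tau> (Suc i)) \<omega> - L (\<tau> i) \<omega>) {..<n}) \<and>
     (\<forall>s h. 0 \<le> s \<and> 0 \<le> h \<longrightarrow>
        distr M borel (\<lambda>\<omega>. L (s + h) \<omega> - L s \<omega>) = distr M borel (\<lambda>\<omega>. L h \<omega> - L 0 \<omega>)) \<and>
     (AE \<omega> in M. cadlag_nonneg (\<lambda>t. L t \<omega>))"

definition path_nonneg :: "(real \<Rightarrow> 'a \<Rightarrow> real) \<Rightarrow> 'a \<Rightarrow> real \<Rightarrow> real" where
  "path_nonneg L \<omega> = restrict (\<lambda>t. L t \<omega>) {0..}"

definition iid_processes :: "'a measure \<Rightarrow> (real \<Rightarrow> 'a \<Rightarrow> real) \<Rightarrow> (real \<Rightarrow> 'a \<Rightarrow> real) \<Rightarrow> bool" where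
  "iid_processes M L1 L2 \<longleftrightarrow>
     prob_space.indep_var M (Pi\<^sub>M {0..} (\<lambda>_. borel)) (path_nonneg L1)
                            (Pi\<^sub>M {0..} (\<lambda>_. borel)) (path_nonneg L2) \<and>
     distr M (Pi\<^sub>M {0..} (\<lambda>_. borel)) (path_nonneg L1) =
     distr M (Pi\<^sub>M {0..} (\<lambda>_. borel)) (path_nonneg L2)"

definition two_sided :: "(real \<Rightarrow> 'a \<Rightarrow> real) \<Rightarrow> (real \<Rightarrow> 'a \<Rightarrow> real) \<Rightarrow> real \<Rightarrow> 'a \<Rightarrow> real" where
  "two_sided L1 L2 t \<omega> = (if 0 \<le> t then L1 t \<omega> else - Lim (at_left (-t)) (\<lambda>u. L2 u \<omega>))"

text \<open>No Gaussian component: the Levy-Khintchine triple of Y (= L_1) has sigma^2 = 0, i.e.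
  the characteristic function of Y is exp(i gamma u + int (e^{iux} - 1 - iux 1_{|x|<=1}) nu(dx))
  for some gamma and a Levy measure nu.\<close>
definition no_gaussian_component :: "'a measure \<Rightarrow> ('a \<Rightarrow> real) \<Rightarrow> bool" where
  "no_gaussian_component M Y \<longleftrightarrow>
     (\<exists>(\<gamma>::real) (\<nu>::real measure).
        sets \<nu> = sets borel \<and> emeasure \<nu> {0} = 0 \<and> integrable \<nu> (\<lambda>x. min 1 (x\<^sup>2)) \<and>
        (\<forall>u. char (distr M borel Y) u =
              exp (\<i> * complex_of_real (\<gamma> * u) +
                   (CLINT x|\<nu>. iexp (u * x) - 1 - \<i> * complex_of_real (u * x * indicator {-1..1} x)))))"

definition C_H :: "real \<Rightarrow> real" where
  "C_H H = ((LINT s|lborel. indicator {0..} s * ((1 + s) powr (H - 1/2) - s powr (H - 1/2))\<^sup>2)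
             + 1 / (2 * H)) powr (-1/2)"

definition f_H :: "real \<Rightarrow> real \<Rightarrow> real \<Rightarrow> real" where
  "f_H H t s = C_H H * (max (t - s) 0 powr (H - 1/2) - max (- s) 0 powr (H - 1/2))"

definition step_fn :: "nat \<Rightarrow> (nat \<Rightarrow> real) \<Rightarrow> (nat \<Rightarrow> real) \<Rightarrow> real \<Rightarrow> real" where
  "step_fn n a s x = (\<Sum>i<n. a i * indicator {s i<..s (Suc i)} x)"

definition step_int :: "(real \<Rightarrow> 'a \<Rightarrow> real) \<Rightarrow> nat \<Rightarrow> (nat \<Rightarrow> real) \<Rightarrow> (nat \<Rightarrow> real) \<Rightarrow> 'a \<Rightarrow> real" where
  "step_int L n a s \<omega> = (\<Sum>i<n. a i * (L (s (Suc i)) \<omega> - L (s i) \<omega>))"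

text \<open>X is (a version of) int f dL: the L^2(P)-limit of integrals of step functions g_k
  with g_k -> f in L^2(R).\<close>
definition levy_integral :: "'a measure \<Rightarrow> (real \<Rightarrow> 'a \<Rightarrow> real) \<Rightarrow> (real \<Rightarrow> real) \<Rightarrow> ('a \<Rightarrow> real) \<Rightarrow> bool" where
  "levy_integral M L f X \<longleftrightarrow>
     X \<in> borel_measurable M \<and>
     (\<exists>(N::nat \<Rightarrow> nat) (A::nat \<Rightarrow> nat \<Rightarrow> real) (S::nat \<Rightarrow> nat \<Rightarrow> real).
        (\<forall>k. \<forall>i<N k. S k i < S k (Suc i)) \<and>
        (\<forall>k. integrable lborel (\<lambda>x. (step_fn (N k) (A k) (S k) x - f x)\<^sup>2)) \<and>
        ((\<lambda>k. LINT x|lborel. (step_fn (N k) (A k) (S k) x - f x)\<^sup>2) \<longlonglongrightarrow> 0) \<and>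
        (\<forall>k. integrable M (\<lambda>\<omega>. (step_int L (N k) (A k) (S k) \<omega> - X \<omega>)\<^sup>2)) \<and>
        ((\<lambda>k. LINT \<omega>|M. (step_int L (N k) (A k) (S k) \<omega> - X \<omega>)\<^sup>2) \<longlonglongrightarrow> 0))"

end

theory Submission
  imports Defs
begin

(* 1. For a one-sided Levy process, stationarity and independence of increments make the
      mean and mean square of L_h - L_0 additive in h.  This gives E(L_h - L_0) = 0 and
      E(L_h - L_0)^2 = sigma2 * h first for rational h; right-continuity of the paths and
      Fatou's lemma extend both to all real h >= 0, and show that left limits agree a.s.
      with the values, so the two-sided process is a.s. equal to a process Lts with
      uncorrelated centred increments.
   2. Polarisation turns this into the isometry E(int g dL)^2 = sigma2 * ||g||^2 for step
      functions g; passing to L^2-limits gives E(X - Y)^2 <= 9 sigma2 ||f - g||^2 for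
      X = int f dL and Y = int g dL.
   3. The kernel is self-similar: ||f_H(a,.) - f_H(b,.)||^2 = (a - b)^(2H) ||f_H(1,.) - f_H(0,.)||^2.
   4. Any process whose increments satisfy E(X_a - X_b)^2 <= C (a - b)^gamma with gamma > 1
      has E(dyadic quadratic variation at level n) <= C (t - s)^gamma (2^(1 - gamma))^n,
      a summable sequence, so the variations tend to 0 almost surely.
   The theorem is 4 applied with gamma = 2H > 1, using 2 and 3 for the increment bound. *)

lemma square_integrable_mult:
  fixes f g :: "'a \<Rightarrow> real"
  assumes "f \<in> borel_measurable M" "g \<in> borel_measurable M"
    and "integrable M (\<lambda>x. (f x)\<^sup>2)" "integrable M (\<lambda>x. (g x)\<^sup>2)"
  shows "integrable M (\<lambda>x. f x * g x)"
proof (rule Bochner_Integration.integrable_bound)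
  show "integrable M (\<lambda>x. (f x)\<^sup>2 + (g x)\<^sup>2)" using assms by auto
  show "(\<lambda>x. f x * g x) \<in> borel_measurable M" using assms by auto
  show "AE x in M. norm (f x * g x) \<le> norm ((f x)\<^sup>2 + (g x)\<^sup>2)"
  proof (intro AE_I2)
    fix x
    have "2 * (\<bar>f x\<bar> * \<bar>g x\<bar>) \<le> (f x)\<^sup>2 + (g x)\<^sup>2"
      using zero_le_power2[of "\<bar>f x\<bar> - \<bar>g x\<bar>"] by (simp add: power2_diff)
    moreover have "0 \<le> \<bar>f x\<bar> * \<bar>g x\<bar>" by simp
    ultimately have "\<bar>f x\<bar> * \<bar>g x\<bar> \<le> (f x)\<^sup>2 + (g x)\<^sup>2" by linarith
    then show "norm (f x * g x) \<le> norm ((f x)\<^sup>2 + (g x)\<^sup>2)" by (simp add: abs_mult)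
  qed
qed

lemma square_integrable_add:
  fixes f g :: "'a \<Rightarrow> real"
  assumes "f \<in> borel_measurable M" "g \<in> borel_measurable M"
    and "integrable M (\<lambda>x. (f x)\<^sup>2)" "integrable M (\<lambda>x. (g x)\<^sup>2)"
  shows "integrable M (\<lambda>x. (f x + g x)\<^sup>2)"
proof -
  have "integrable M (\<lambda>x. (f x)\<^sup>2 + 2 * (f x * g x) + (g x)\<^sup>2)"
    using assms square_integrable_mult[OF assms] by auto
  then show ?thesis by (simp add: power2_sum algebra_simps)
qed

(* The squared distance satisfies a weak triangle inequality with constant 3, coming from
   (x + y + z)^2 <= 3 (x^2 + y^2 + z^2). *)
lemma square_distance_chain:
  fixes A B C D :: "'a \<Rightarrow> real"
  assumes [measurable]: "A \<in> borel_measurable M" "B \<in> borel_measurable M"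
      "C \<in> borel_measurable M" "D \<in> borel_measurable M"
    and AB: "integrable M (\<lambda>x. (A x - B x)\<^sup>2)" and BC: "integrable M (\<lambda>x. (B x - C x)\<^sup>2)"
    and CD: "integrable M (\<lambda>x. (C x - D x)\<^sup>2)"
  shows "integrable M (\<lambda>x. (A x - D x)\<^sup>2)"
    "(\<integral>x. (A x - D x)\<^sup>2 \<partial>M) \<le>
       3 * ((\<integral>x. (A x - B x)\<^sup>2 \<partial>M) + (\<integral>x. (B x - C x)\<^sup>2 \<partial>M) + (\<integral>x. (C x - D x)\<^sup>2 \<partial>M))"
proof -
  have pointwise: "(A x - D x)\<^sup>2 \<le> 3 * ((A x - B x)\<^sup>2 + (B x - C x)\<^sup>2 + (C x - D x)\<^sup>2)" for x
  proof -
    have "0 \<le> (A x - 2 * B x + C x)\<^sup>2 + (B x - 2 * C x + D x)\<^sup>2 + (A x - B x - C x + D x)\<^sup>2"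
      by simp
    then show ?thesis by (simp add: power2_eq_square algebra_simps)
  qed
  have bound: "integrable M (\<lambda>x. 3 * ((A x - B x)\<^sup>2 + (B x - C x)\<^sup>2 + (C x - D x)\<^sup>2))"
    using AB BC CD by auto
  show AD: "integrable M (\<lambda>x. (A x - D x)\<^sup>2)"
    by (rule Bochner_Integration.integrable_bound[OF bound]) (use pointwise in auto)
  have "(\<integral>x. (A x - D x)\<^sup>2 \<partial>M) \<le> (\<integral>x. 3 * ((A x - B x)\<^sup>2 + (B x - C x)\<^sup>2 + (C x - D x)\<^sup>2) \<partial>M)"
    by (rule integral_mono[OF AD bound pointwise])
  then show "(\<integral>x. (A x - D x)\<^sup>2 \<partial>M) \<le>
       3 * ((\<integral>x. (A x - B x)\<^sup>2 \<partial>M) + (\<integral>x. (B x - C x)\<^sup>2 \<partial>M) + (\<integral>x. (C x - D x)\<^sup>2 \<partial>M))"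
    using AB BC CD by simp
qed

lemma integral_eq_if_distr_eq:
  fixes X Y :: "'a \<Rightarrow> real" and g :: "real \<Rightarrow> real"
  assumes "X \<in> borel_measurable M" "Y \<in> borel_measurable M"
    and "distr M borel X = distr M borel Y" "g \<in> borel_measurable borel"
  shows "integrable M (\<lambda>\<omega>. g (X \<omega>)) \<longleftrightarrow> integrable M (\<lambda>\<omega>. g (Y \<omega>))"
    and "(\<integral>\<omega>. g (X \<omega>) \<partial>M) = (\<integral>\<omega>. g (Y \<omega>) \<partial>M)"
  using integrable_distr_eq[OF assms(1,4)] integrable_distr_eq[OF assms(2,4)]
    integral_distr[OF assms(1,4)] integral_distr[OF assms(2,4)] assms(3)
  by simp_all

lemma (in prob_space) square_expectation_le:
  fixes W :: "'a \<Rightarrow> real"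
  assumes [measurable]: "W \<in> borel_measurable M" and W2: "integrable M (\<lambda>\<omega>. (W \<omega>)\<^sup>2)"
  shows "(expectation W)\<^sup>2 \<le> expectation (\<lambda>\<omega>. (W \<omega>)\<^sup>2)"
  using variance_positive[of W] variance_eq[OF square_integrable_imp_integrable[OF _ W2] W2]
  by simp

lemma second_moment_finite_if_shifted:
  fixes N :: "real measure" and y :: real
  assumes "prob_space N" and sets: "sets N = sets borel"
    and shifted: "(\<integral>\<^sup>+x. ennreal ((x + y)\<^sup>2) \<partial>N) \<noteq> \<infinity>"
  shows "(\<integral>\<^sup>+x. ennreal (x\<^sup>2) \<partial>N) < \<infinity>"
proof -
  interpret N: prob_space N by fact
  have meas: "(\<lambda>x. ennreal ((x + y)\<^sup>2)) \<in> borel_measurable N"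
    by (subst measurable_cong_sets[OF sets refl]) simp
  have "(\<integral>\<^sup>+x. ennreal (x\<^sup>2) \<partial>N) \<le> (\<integral>\<^sup>+x. 2 * ennreal ((x + y)\<^sup>2) + ennreal (2 * y\<^sup>2) \<partial>N)"
  proof (intro nn_integral_mono)
    fix x :: real
    have "x\<^sup>2 \<le> 2 * (x + y)\<^sup>2 + 2 * y\<^sup>2"
      using zero_le_power2[of "x + 2 * y"] by (simp add: power2_eq_square algebra_simps)
    then have "ennreal (x\<^sup>2) \<le> ennreal (2 * (x + y)\<^sup>2 + 2 * y\<^sup>2)" by (rule ennreal_leI)
    then show "ennreal (x\<^sup>2) \<le> 2 * ennreal ((x + y)\<^sup>2) + ennreal (2 * y\<^sup>2)"
      by (simp add: ennreal_plus ennreal_mult)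
  qed
  also have "\<dots> = 2 * (\<integral>\<^sup>+x. ennreal ((x + y)\<^sup>2) \<partial>N) + ennreal (2 * y\<^sup>2)"
    using N.emeasure_space_1 meas by (subst nn_integral_add) (auto simp: nn_integral_cmult)
  also have "\<dots> < \<infinity>" using shifted by (simp add: less_top ennreal_mult_less_top)
  finally show ?thesis .
qed

(* If X + Y is square integrable and X, Y are independent, then so is X: conditioning on
   a suitable value y of Y, the law of X has a finite second moment about -y. *)
lemma (in prob_space) square_integrable_indep_summand:
  fixes X Y :: "'a \<Rightarrow> real"
  assumes ind: "indep_var borel X borel Y" and sq: "integrable M (\<lambda>\<omega>. (X \<omega> + Y \<omega>)\<^sup>2)"
  shows "integrable M (\<lambda>\<omega>. (X \<omega>)\<^sup>2)"
proof -
  have [measurable]: "X \<in> borel_measurable M" "Y \<in> borel_measurable M"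
    using ind indep_var_rv1 indep_var_rv2 by blast+
  define PX where "PX = distr M borel X"
  define PY where "PY = distr M borel Y"
  interpret PX: prob_space PX unfolding PX_def by (rule prob_space_distr) simp
  interpret PY: prob_space PY unfolding PY_def by (rule prob_space_distr) simp
  interpret PXY: pair_sigma_finite PX PY ..
  have joint: "PX \<Otimes>\<^sub>M PY = distr M (borel \<Otimes>\<^sub>M borel) (\<lambda>\<omega>. (X \<omega>, Y \<omega>))"
    using ind indep_var_distribution_eq unfolding PX_def PY_def by blast
  have "(\<integral>\<^sup>+\<omega>. ennreal ((X \<omega> + Y \<omega>)\<^sup>2) \<partial>M) = ennreal (\<integral>\<omega>. (X \<omega> + Y \<omega>)\<^sup>2 \<partial>M)"
    using sq by (intro nn_integral_eq_integral) auto
  also have "(\<integral>\<^sup>+\<omega>. ennreal ((X \<omega> + Y \<omega>)\<^sup>2) \<partial>M)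
      = (\<integral>\<^sup>+p. ennreal ((fst p + snd p)\<^sup>2) \<partial>(PX \<Otimes>\<^sub>M PY))"
    by (simp add: joint nn_integral_distr)
  also have "\<dots> = (\<integral>\<^sup>+y. (\<integral>\<^sup>+x. ennreal ((x + y)\<^sup>2) \<partial>PX) \<partial>PY)"
    by (subst PXY.nn_integral_snd[symmetric]) (auto simp: PX_def PY_def)
  finally have "(\<integral>\<^sup>+y. (\<integral>\<^sup>+x. ennreal ((x + y)\<^sup>2) \<partial>PX) \<partial>PY) \<noteq> \<infinity>" by simp
  then have "AE y in PY. (\<integral>\<^sup>+x. ennreal ((x + y)\<^sup>2) \<partial>PX) \<noteq> \<infinity>"
  proof (rule nn_integral_PInf_AE[rotated])
    have "case_prod (\<lambda>y x. ennreal ((x + y)\<^sup>2)) \<in> borel_measurable (PY \<Otimes>\<^sub>M PX)"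
      unfolding PX_def PY_def by measurable
    then show "(\<lambda>y. \<integral>\<^sup>+x. ennreal ((x + y)\<^sup>2) \<partial>PX) \<in> borel_measurable PY"
      by (rule PX.borel_measurable_nn_integral)
  qed
  then obtain y where y: "(\<integral>\<^sup>+x. ennreal ((x + y)\<^sup>2) \<partial>PX) \<noteq> \<infinity>"
    using PY.AE_False eventually_mono by fastforce
  have "(\<integral>\<^sup>+x. ennreal (x\<^sup>2) \<partial>PX) < \<infinity>"
    using second_moment_finite_if_shifted[OF PX.prob_space_axioms _ y] by (simp add: PX_def)
  then have "(\<integral>\<^sup>+\<omega>. ennreal ((X \<omega>)\<^sup>2) \<partial>M) < \<infinity>"
    unfolding PX_def by (subst (asm) nn_integral_distr) auto
  then show ?thesis by (intro integrableI_bounded) auto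
qed

lemma (in prob_space) indep_sum_square_moments:
  fixes X Y :: "'a \<Rightarrow> real"
  assumes ind: "indep_var borel X borel Y"
    and X2: "integrable M (\<lambda>\<omega>. (X \<omega>)\<^sup>2)" and Y2: "integrable M (\<lambda>\<omega>. (Y \<omega>)\<^sup>2)"
  shows "integrable M (\<lambda>\<omega>. (X \<omega> + Y \<omega>)\<^sup>2)"
    "expectation (\<lambda>\<omega>. (X \<omega> + Y \<omega>)\<^sup>2) =
       expectation (\<lambda>\<omega>. (X \<omega>)\<^sup>2) + expectation (\<lambda>\<omega>. (Y \<omega>)\<^sup>2) + 2 * expectation X * expectation Y"
proof -
  have [measurable]: "X \<in> borel_measurable M" "Y \<in> borel_measurable M"
    using ind indep_var_rv1 indep_var_rv2 by blast+
  have X: "integrable M X" and Y: "integrable M Y"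
    using X2 Y2 by (auto intro: square_integrable_imp_integrable)
  have XY: "integrable M (\<lambda>\<omega>. X \<omega> * Y \<omega>)"
    "expectation (\<lambda>\<omega>. X \<omega> * Y \<omega>) = expectation X * expectation Y"
    using indep_var_integrable[OF ind X Y] indep_var_lebesgue_integral[OF ind X Y] by auto
  have expand: "(\<lambda>\<omega>. (X \<omega> + Y \<omega>)\<^sup>2) = (\<lambda>\<omega>. (X \<omega>)\<^sup>2 + 2 * (X \<omega> * Y \<omega>) + (Y \<omega>)\<^sup>2)"
    by (auto simp: power2_sum)
  show "integrable M (\<lambda>\<omega>. (X \<omega> + Y \<omega>)\<^sup>2)"
    "expectation (\<lambda>\<omega>. (X \<omega> + Y \<omega>)\<^sup>2) =
       expectation (\<lambda>\<omega>. (X \<omega>)\<^sup>2) + expectation (\<lambda>\<omega>. (Y \<omega>)\<^sup>2) + 2 * expectation X * expectation Y"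
    unfolding expand using X2 Y2 XY by auto
qed

lemma fatou_square_distance:
  fixes F :: "nat \<Rightarrow> 'a \<Rightarrow> real" and G :: "'a \<Rightarrow> real" and B :: "nat \<Rightarrow> real"
  assumes [measurable]: "\<And>m. F m \<in> borel_measurable M" "G \<in> borel_measurable M"
    and int: "\<And>m. integrable M (\<lambda>\<omega>. (F m \<omega> - G \<omega>)\<^sup>2)"
    and le: "\<And>m. (\<integral>\<omega>. (F m \<omega> - G \<omega>)\<^sup>2 \<partial>M) \<le> B m"
    and lim: "B \<longlonglongrightarrow> b"
  shows "(\<integral>\<^sup>+\<omega>. liminf (\<lambda>m. ennreal ((F m \<omega> - G \<omega>)\<^sup>2)) \<partial>M) \<le> ennreal b"
proof -
  have "(\<integral>\<^sup>+\<omega>. liminf (\<lambda>m. ennreal ((F m \<omega> - G \<omega>)\<^sup>2)) \<partial>M)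
      \<le> liminf (\<lambda>m. \<integral>\<^sup>+\<omega>. ennreal ((F m \<omega> - G \<omega>)\<^sup>2) \<partial>M)"
    by (rule nn_integral_liminf) auto
  also have "\<dots> = liminf (\<lambda>m. ennreal (\<integral>\<omega>. (F m \<omega> - G \<omega>)\<^sup>2 \<partial>M))"
    using int by (subst nn_integral_eq_integral) auto
  also have "\<dots> \<le> liminf (\<lambda>m. ennreal (B m))"
    using le by (intro Liminf_mono always_eventually allI ennreal_leI)
  also have "\<dots> = ennreal b"
    by (intro lim_imp_Liminf tendsto_ennrealI lim) auto
  finally show ?thesis .
qed

lemma fatou_square_distance_limit:
  fixes F :: "nat \<Rightarrow> 'a \<Rightarrow> real" and G Flim :: "'a \<Rightarrow> real" and B :: "nat \<Rightarrow> real"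
  assumes [measurable]: "\<And>m. F m \<in> borel_measurable M" "G \<in> borel_measurable M"
      "Flim \<in> borel_measurable M"
    and int: "\<And>m. integrable M (\<lambda>\<omega>. (F m \<omega> - G \<omega>)\<^sup>2)"
    and le: "\<And>m. (\<integral>\<omega>. (F m \<omega> - G \<omega>)\<^sup>2 \<partial>M) \<le> B m"
    and lim: "B \<longlonglongrightarrow> b"
    and conv: "AE \<omega> in M. (\<lambda>m. F m \<omega>) \<longlonglongrightarrow> Flim \<omega>"
  shows "integrable M (\<lambda>\<omega>. (Flim \<omega> - G \<omega>)\<^sup>2)" "(\<integral>\<omega>. (Flim \<omega> - G \<omega>)\<^sup>2 \<partial>M) \<le> b"
proof -
  have "(\<integral>\<^sup>+\<omega>. ennreal ((Flim \<omega> - G \<omega>)\<^sup>2) \<partial>M)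
      = (\<integral>\<^sup>+\<omega>. liminf (\<lambda>m. ennreal ((F m \<omega> - G \<omega>)\<^sup>2)) \<partial>M)"
  proof (intro nn_integral_cong_AE eventually_mono[OF conv])
    fix \<omega> assume "(\<lambda>m. F m \<omega>) \<longlonglongrightarrow> Flim \<omega>"
    then have "(\<lambda>m. ennreal ((F m \<omega> - G \<omega>)\<^sup>2)) \<longlonglongrightarrow> ennreal ((Flim \<omega> - G \<omega>)\<^sup>2)"
      by (intro tendsto_ennrealI tendsto_intros)
    then show "ennreal ((Flim \<omega> - G \<omega>)\<^sup>2) = liminf (\<lambda>m. ennreal ((F m \<omega> - G \<omega>)\<^sup>2))"
      by (metis lim_imp_Liminf sequentially_bot)
  qed
  also have "\<dots> \<le> ennreal b" by (rule fatou_square_distance[OF assms(1,2) int le lim])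
  finally have nn: "(\<integral>\<^sup>+\<omega>. ennreal ((Flim \<omega> - G \<omega>)\<^sup>2) \<partial>M) \<le> ennreal b" .
  then show i: "integrable M (\<lambda>\<omega>. (Flim \<omega> - G \<omega>)\<^sup>2)"
    by (intro integrableI_bounded) (auto simp: top_unique intro: le_less_trans)
  have "0 \<le> b"
  proof (rule LIMSEQ_le_const[OF lim], intro exI allI impI)
    fix n
    have "0 \<le> (\<integral>\<omega>. (F n \<omega> - G \<omega>)\<^sup>2 \<partial>M)" by (rule integral_nonneg_AE) auto
    then show "0 \<le> B n" using le[of n] by linarith
  qed
  moreover have "ennreal (\<integral>\<omega>. (Flim \<omega> - G \<omega>)\<^sup>2 \<partial>M) \<le> ennreal b"
    using nn i by (subst (asm) nn_integral_eq_integral) auto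
  ultimately show "(\<integral>\<omega>. (Flim \<omega> - G \<omega>)\<^sup>2 \<partial>M) \<le> b" by (simp add: ennreal_le_iff)
qed

lemma square_diff_commute: "(\<lambda>x. (f x - g x)\<^sup>2 :: real) = (\<lambda>x. (g x - f x)\<^sup>2)"
  by (simp add: power2_commute)

(* If IX_k -> X and IY_k -> Y in L^2(M), sf_k -> f and
   sg_k -> g in L^2(N), and E(IX_k - IY_k)^2 = c ||sf_k - sg_k||^2, then
   E(X - Y)^2 <= 9 c ||f - g||^2; the constant comes from two weak triangle inequalities. *)
lemma isometric_approximation_bound:
  fixes X Y :: "'a \<Rightarrow> real" and IX IY :: "nat \<Rightarrow> 'a \<Rightarrow> real"
    and f g :: "'b \<Rightarrow> real" and sf sg :: "nat \<Rightarrow> 'b \<Rightarrow> real" and c :: real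
  assumes [measurable]: "X \<in> borel_measurable M" "Y \<in> borel_measurable M"
      "\<And>k. IX k \<in> borel_measurable M" "\<And>k. IY k \<in> borel_measurable M"
      "f \<in> borel_measurable N" "g \<in> borel_measurable N"
      "\<And>k. sf k \<in> borel_measurable N" "\<And>k. sg k \<in> borel_measurable N"
    and "0 \<le> c"
    and XM: "\<And>k. integrable M (\<lambda>\<omega>. (IX k \<omega> - X \<omega>)\<^sup>2)" "(\<lambda>k. \<integral>\<omega>. (IX k \<omega> - X \<omega>)\<^sup>2 \<partial>M) \<longlonglongrightarrow> 0"
    and YM: "\<And>k. integrable M (\<lambda>\<omega>. (IY k \<omega> - Y \<omega>)\<^sup>2)" "(\<lambda>k. \<integral>\<omega>. (IY k \<omega> - Y \<omega>)\<^sup>2 \<partial>M) \<longlonglongrightarrow> 0"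
    and fN: "\<And>k. integrable N (\<lambda>x. (sf k x - f x)\<^sup>2)" "(\<lambda>k. \<integral>x. (sf k x - f x)\<^sup>2 \<partial>N) \<longlonglongrightarrow> 0"
    and gN: "\<And>k. integrable N (\<lambda>x. (sg k x - g x)\<^sup>2)" "(\<lambda>k. \<integral>x. (sg k x - g x)\<^sup>2 \<partial>N) \<longlonglongrightarrow> 0"
    and iso: "\<And>k. integrable M (\<lambda>\<omega>. (IX k \<omega> - IY k \<omega>)\<^sup>2)" "\<And>k. integrable N (\<lambda>x. (sf k x - sg k x)\<^sup>2)"
      "\<And>k. (\<integral>\<omega>. (IX k \<omega> - IY k \<omega>)\<^sup>2 \<partial>M) = c * (\<integral>x. (sf k x - sg k x)\<^sup>2 \<partial>N)"
  shows "integrable M (\<lambda>\<omega>. (X \<omega> - Y \<omega>)\<^sup>2)"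
    "(\<integral>\<omega>. (X \<omega> - Y \<omega>)\<^sup>2 \<partial>M) \<le> 9 * c * (\<integral>x. (f x - g x)\<^sup>2 \<partial>N)"
proof -
  note XM' = XM[unfolded square_diff_commute[of "IX _"]]
  note gN' = gN[unfolded square_diff_commute[of "sg _"]]
  have fg: "integrable N (\<lambda>x. (f x - g x)\<^sup>2)"
    using square_distance_chain(1)[of f _ "sf 0" "sg 0" g] fN(1)[unfolded square_diff_commute[of "sf _"]]
      iso(2) gN(1) by simp
  have chainN: "(\<integral>x. (sf k x - sg k x)\<^sup>2 \<partial>N) \<le>
      3 * ((\<integral>x. (sf k x - f x)\<^sup>2 \<partial>N) + (\<integral>x. (f x - g x)\<^sup>2 \<partial>N) + (\<integral>x. (g x - sg k x)\<^sup>2 \<partial>N))" for k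
    using square_distance_chain(2)[of "sf k" _ f g "sg k"] fN(1) fg gN'(1) by simp
  show "integrable M (\<lambda>\<omega>. (X \<omega> - Y \<omega>)\<^sup>2)"
    using square_distance_chain(1)[of X _ "IX 0" "IY 0" Y] XM'(1) iso(1) YM(1) by simp
  have chainM: "(\<integral>\<omega>. (X \<omega> - Y \<omega>)\<^sup>2 \<partial>M) \<le>
      3 * ((\<integral>\<omega>. (X \<omega> - IX k \<omega>)\<^sup>2 \<partial>M) + (\<integral>\<omega>. (IX k \<omega> - IY k \<omega>)\<^sup>2 \<partial>M) + (\<integral>\<omega>. (IY k \<omega> - Y \<omega>)\<^sup>2 \<partial>M))" for k
    using square_distance_chain(2)[of X _ "IX k" "IY k" Y] XM'(1) iso(1) YM(1) by simp
  define R where "R k = 3 * ((\<integral>\<omega>. (X \<omega> - IX k \<omega>)\<^sup>2 \<partial>M) + c * (3 * ((\<integral>x. (sf k x - f x)\<^sup>2 \<partial>N)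
      + (\<integral>x. (f x - g x)\<^sup>2 \<partial>N) + (\<integral>x. (g x - sg k x)\<^sup>2 \<partial>N))) + (\<integral>\<omega>. (IY k \<omega> - Y \<omega>)\<^sup>2 \<partial>M))" for k
  have le_R: "(\<integral>\<omega>. (X \<omega> - Y \<omega>)\<^sup>2 \<partial>M) \<le> R k" for k
  proof -
    have "(\<integral>\<omega>. (IX k \<omega> - IY k \<omega>)\<^sup>2 \<partial>M) \<le> c * (3 * ((\<integral>x. (sf k x - f x)\<^sup>2 \<partial>N)
      + (\<integral>x. (f x - g x)\<^sup>2 \<partial>N) + (\<integral>x. (g x - sg k x)\<^sup>2 \<partial>N)))"
      unfolding iso(3) by (rule mult_left_mono[OF chainN \<open>0 \<le> c\<close>])
    then show ?thesis unfolding R_def by (intro order_trans[OF chainM[of k]]) simp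
  qed
  have "R \<longlonglongrightarrow> 3 * (0 + c * (3 * (0 + (\<integral>x. (f x - g x)\<^sup>2 \<partial>N) + 0)) + 0)"
    unfolding R_def using fN(2) gN'(2) XM'(2) YM(2) by (intro tendsto_intros) auto
  then have "(\<integral>\<omega>. (X \<omega> - Y \<omega>)\<^sup>2 \<partial>M) \<le> 3 * (0 + c * (3 * (0 + (\<integral>x. (f x - g x)\<^sup>2 \<partial>N) + 0)) + 0)"
    by (rule LIMSEQ_le_const) (use le_R in auto)
  then show "(\<integral>\<omega>. (X \<omega> - Y \<omega>)\<^sup>2 \<partial>M) \<le> 9 * c * (\<integral>x. (f x - g x)\<^sup>2 \<partial>N)"
    by simp
qed

lemma rational_approximation_from_above:
  fixes h :: real
  obtains r :: "nat \<Rightarrow> real" where "\<And>n. r n \<in> \<rat>" "\<And>n. h < r n" "r \<longlonglongrightarrow> h"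
proof
  define r where "r n = (of_int \<lfloor>h * real (Suc n)\<rfloor> + 1) / real (Suc n)" for n
  show "r n \<in> \<rat>" for n unfolding r_def by (intro Rats_divide Rats_add Rats_of_int Rats_of_nat Rats_1)
  have bounds: "h < r n \<and> r n \<le> h + inverse (real (Suc n))" for n
  proof
    have "h * real (Suc n) < of_int \<lfloor>h * real (Suc n)\<rfloor> + 1" by linarith
    then show "h < r n" unfolding r_def by (simp add: field_simps)
    have "of_int \<lfloor>h * real (Suc n)\<rfloor> + 1 \<le> h * real (Suc n) + 1" by linarith
    then have "r n \<le> (h * real (Suc n) + 1) / real (Suc n)"
      unfolding r_def by (rule divide_right_mono) simp
    then show "r n \<le> h + inverse (real (Suc n))" by (simp add: field_simps)
  qed
  then show "h < r n" for n by blast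
  show "r \<longlonglongrightarrow> h"
    by (rule tendsto_sandwich[OF _ _ tendsto_const LIMSEQ_inverse_real_of_nat_add[of h]])
       (use bounds in \<open>auto intro: always_eventually less_imp_le\<close>)
qed

locale levy_proc =
  fixes M :: "'a measure" and L :: "real \<Rightarrow> 'a \<Rightarrow> real"
  assumes levy: "levy_process M L"
begin

sublocale prob_space M using levy unfolding levy_process_def by blast

lemma measurable_L [measurable]: "0 \<le> t \<Longrightarrow> L t \<in> borel_measurable M"
  using levy unfolding levy_process_def by blast

lemma L_0_AE: "AE \<omega> in M. L 0 \<omega> = 0"
  using levy unfolding levy_process_def by blast

lemma cadlag_AE: "AE \<omega> in M. cadlag_nonneg (\<lambda>t. L t \<omega>)"
  using levy unfolding levy_process_def by blast

lemma stationary_increments: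
  "0 \<le> s \<Longrightarrow> 0 \<le> h \<Longrightarrow>
     distr M borel (\<lambda>\<omega>. L (s + h) \<omega> - L s \<omega>) = distr M borel (\<lambda>\<omega>. L h \<omega> - L 0 \<omega>)"
  using levy unfolding levy_process_def by blast

lemma independent_increments:
  "0 \<le> \<tau> 0 \<Longrightarrow> (\<forall>i<n. \<tau> i < \<tau> (Suc i)) \<Longrightarrow>
     indep_vars (\<lambda>_. borel) (\<lambda>i \<omega>. L (\<tau> (Suc i)) \<omega> - L (\<tau> i) \<omega>) {..<n}"
  using levy unfolding levy_process_def by blast

lemma increment_stationary:
  fixes g :: "real \<Rightarrow> real"
  assumes "0 \<le> u" "u \<le> v" "g \<in> borel_measurable borel"
  shows "integrable M (\<lambda>\<omega>. g (L v \<omega> - L u \<omega>)) \<longleftrightarrow> integrable M (\<lambda>\<omega>. g (L (v - u) \<omega> - L 0 \<omega>))"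
    "(\<integral>\<omega>. g (L v \<omega> - L u \<omega>) \<partial>M) = (\<integral>\<omega>. g (L (v - u) \<omega> - L 0 \<omega>) \<partial>M)"
proof -
  have "distr M borel (\<lambda>\<omega>. L v \<omega> - L u \<omega>) = distr M borel (\<lambda>\<omega>. L (v - u) \<omega> - L 0 \<omega>)"
    using stationary_increments[of u "v - u"] assms by simp
  from integral_eq_if_distr_eq[OF _ _ this assms(3)] assms
  show "integrable M (\<lambda>\<omega>. g (L v \<omega> - L u \<omega>)) \<longleftrightarrow> integrable M (\<lambda>\<omega>. g (L (v - u) \<omega> - L 0 \<omega>))"
    "(\<integral>\<omega>. g (L v \<omega> - L u \<omega>) \<partial>M) = (\<integral>\<omega>. g (L (v - u) \<omega> - L 0 \<omega>) \<partial>M)"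
    by auto
qed

lemma indep_increments:
  assumes "0 < a" "0 < b"
  shows "indep_var borel (\<lambda>\<omega>. L a \<omega> - L 0 \<omega>) borel (\<lambda>\<omega>. L (a + b) \<omega> - L a \<omega>)"
proof -
  define \<tau> :: "nat \<Rightarrow> real" where "\<tau> i = (if i = 0 then 0 else if i = 1 then a else a + b)" for i
  have "indep_vars (\<lambda>_. borel) (\<lambda>i \<omega>. L (\<tau> (Suc i)) \<omega> - L (\<tau> i) \<omega>) {..<2}"
    by (rule independent_increments) (use assms in \<open>auto simp: \<tau>_def less_Suc_eq numeral_2_eq_2\<close>)
  then have "indep_var (Pi\<^sub>M {0} (\<lambda>_. borel)) (\<lambda>\<omega>. restrict (\<lambda>i. L (\<tau> (Suc i)) \<omega> - L (\<tau> i) \<omega>) {0})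
     (Pi\<^sub>M {1} (\<lambda>_. borel)) (\<lambda>\<omega>. restrict (\<lambda>i. L (\<tau> (Suc i)) \<omega> - L (\<tau> i) \<omega>) {1})"
    by (rule indep_var_restrict) auto
  from indep_var_compose[OF this measurable_component_singleton[of 0 "{0::nat}" "\<lambda>_. borel"]
      measurable_component_singleton[of 1 "{1::nat}" "\<lambda>_. borel"]]
  show ?thesis by (simp add: comp_def \<tau>_def)
qed

end

locale centered_levy = levy_proc +
  assumes L2_one: "integrable M (\<lambda>\<omega>. (L 1 \<omega> - L 0 \<omega>)\<^sup>2)"
    and mean_one: "expectation (\<lambda>\<omega>. L 1 \<omega> - L 0 \<omega>) = 0"
begin

definition incr_L2 :: "real \<Rightarrow> bool" where
  "incr_L2 h \<longleftrightarrow> integrable M (\<lambda>\<omega>. (L h \<omega> - L 0 \<omega>)\<^sup>2)"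

definition incr_mean :: "real \<Rightarrow> real" where
  "incr_mean h = expectation (\<lambda>\<omega>. L h \<omega> - L 0 \<omega>)"

definition incr_msq :: "real \<Rightarrow> real" where
  "incr_msq h = expectation (\<lambda>\<omega>. (L h \<omega> - L 0 \<omega>)\<^sup>2)"

definition sigma2 :: real where
  "sigma2 = incr_msq 1"

lemma incr_msq_nonneg: "0 \<le> incr_msq h"
  unfolding incr_msq_def by (rule integral_nonneg_AE) auto

lemma sigma2_nonneg: "0 \<le> sigma2"
  unfolding sigma2_def by (rule incr_msq_nonneg)

lemma increment_moments:
  assumes "0 \<le> u" "u \<le> v" "incr_L2 (v - u)"
  shows "integrable M (\<lambda>\<omega>. (L v \<omega> - L u \<omega>)\<^sup>2)"
    "expectation (\<lambda>\<omega>. (L v \<omega> - L u \<omega>)\<^sup>2) = incr_msq (v - u)"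
    "integrable M (\<lambda>\<omega>. L v \<omega> - L u \<omega>)"
    "expectation (\<lambda>\<omega>. L v \<omega> - L u \<omega>) = incr_mean (v - u)"
proof -
  show sq: "integrable M (\<lambda>\<omega>. (L v \<omega> - L u \<omega>)\<^sup>2)"
    using increment_stationary(1)[OF assms(1,2), of "\<lambda>x. x\<^sup>2"] assms(3) unfolding incr_L2_def by auto
  show "expectation (\<lambda>\<omega>. (L v \<omega> - L u \<omega>)\<^sup>2) = incr_msq (v - u)"
    using increment_stationary(2)[OF assms(1,2), of "\<lambda>x. x\<^sup>2"] unfolding incr_msq_def by auto
  show "integrable M (\<lambda>\<omega>. L v \<omega> - L u \<omega>)"
    by (rule square_integrable_imp_integrable[OF _ sq]) (use assms in auto)
  show "expectation (\<lambda>\<omega>. L v \<omega> - L u \<omega>) = incr_mean (v - u)"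
    using increment_stationary(2)[OF assms(1,2), of "\<lambda>x. x"] unfolding incr_mean_def by auto
qed

lemma moments_add:
  assumes "0 \<le> a" "0 \<le> b" "incr_L2 a" "incr_L2 b"
  shows "incr_L2 (a + b) \<and> incr_mean (a + b) = incr_mean a + incr_mean b \<and>
    incr_msq (a + b) = incr_msq a + incr_msq b + 2 * incr_mean a * incr_mean b"
proof (cases "a = 0 \<or> b = 0")
  case True
  then show ?thesis using assms by (auto simp: incr_L2_def incr_mean_def incr_msq_def)
next
  case False
  then have ab: "0 < a" "0 < b" using assms by auto
  define X where "X = (\<lambda>\<omega>. L a \<omega> - L 0 \<omega>)"
  define Y where "Y = (\<lambda>\<omega>. L (a + b) \<omega> - L a \<omega>)"
  have sum: "L (a + b) \<omega> - L 0 \<omega> = X \<omega> + Y \<omega>" for \<omega> by (simp add: X_def Y_def)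
  have ind: "indep_var borel X borel Y" unfolding X_def Y_def by (rule indep_increments[OF ab])
  have X: "integrable M (\<lambda>\<omega>. (X \<omega>)\<^sup>2)" "integrable M X"
    "expectation X = incr_mean a" "expectation (\<lambda>\<omega>. (X \<omega>)\<^sup>2) = incr_msq a"
    using increment_moments[of 0 a] assms unfolding X_def by auto
  have Y: "integrable M (\<lambda>\<omega>. (Y \<omega>)\<^sup>2)" "integrable M Y"
    "expectation Y = incr_mean b" "expectation (\<lambda>\<omega>. (Y \<omega>)\<^sup>2) = incr_msq b"
    using increment_moments[of a "a + b"] assms unfolding Y_def by auto
  show ?thesis
    unfolding incr_L2_def[of "a + b"] incr_mean_def[of "a + b"] incr_msq_def[of "a + b"] sum
    using indep_sum_square_moments[OF ind X(1) Y(1)] X Y by simp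
qed

(* L_(1/n) - L_0 is an independent summand of L_1 - L_0, hence square integrable. *)
lemma L2_inverse_nat: "0 < n \<Longrightarrow> incr_L2 (1 / real n)"
proof (cases "n = 1")
  case True then show ?thesis using L2_one unfolding incr_L2_def by simp
next
  case False
  assume "0 < n"
  with False have "0 < 1 / real n" "0 < 1 - 1 / real n" by auto
  then have "indep_var borel (\<lambda>\<omega>. L (1 / real n) \<omega> - L 0 \<omega>)
      borel (\<lambda>\<omega>. L (1 / real n + (1 - 1 / real n)) \<omega> - L (1 / real n) \<omega>)"
    by (rule indep_increments)
  moreover have "integrable M (\<lambda>\<omega>. ((L (1 / real n) \<omega> - L 0 \<omega>) +
      (L (1 / real n + (1 - 1 / real n)) \<omega> - L (1 / real n) \<omega>))\<^sup>2)"
    using L2_one by simp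
  ultimately show ?thesis unfolding incr_L2_def by (rule square_integrable_indep_summand)
qed

lemma moments_multiple:
  assumes "0 < n"
  shows "incr_L2 (real k / real n) \<and> incr_mean (real k / real n) = real k * incr_mean (1 / real n) \<and>
     incr_msq (real k / real n) =
       real k * incr_msq (1 / real n) + real k * (real k - 1) * (incr_mean (1 / real n))\<^sup>2"
proof (induction k)
  case 0 then show ?case by (simp add: incr_L2_def incr_mean_def incr_msq_def)
next
  case (Suc k)
  have e: "real (Suc k) / real n = real k / real n + 1 / real n" by (simp add: add_divide_distrib)
  from Suc L2_inverse_nat[OF assms] show ?case
    unfolding e using moments_add[of "real k / real n" "1 / real n"]
    by (simp add: algebra_simps power2_eq_square)
qed

lemma moments_rational:
  assumes "r \<in> \<rat>" "0 \<le> r"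
  shows "incr_L2 r \<and> incr_mean r = 0 \<and> incr_msq r = sigma2 * r"
proof -
  obtain k n where n: "n \<noteq> 0" and r: "r = real k / real n"
    using Rats_abs_nat_div_natE[OF assms(1)] assms(2) by (metis abs_of_nonneg)
  have n1: "real n / real n = 1" using n by simp
  from moments_multiple[of n n] n mean_one have "incr_mean (1 / real n) = 0"
    unfolding n1 incr_mean_def by simp
  moreover from moments_multiple[of n n] n this have "incr_msq (1 / real n) = sigma2 / real n"
    unfolding n1 sigma2_def by (simp add: field_simps)
  ultimately show ?thesis using moments_multiple[of n k] n unfolding r by simp
qed

lemma rational_increment_msq:
  assumes "r \<in> \<rat>" "r' \<in> \<rat>" "0 \<le> r" "r \<le> r'"
  shows "integrable M (\<lambda>\<omega>. (L r' \<omega> - L r \<omega>)\<^sup>2) \<and>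
    expectation (\<lambda>\<omega>. (L r' \<omega> - L r \<omega>)\<^sup>2) = sigma2 * (r' - r)"
  using increment_moments[of r r'] moments_rational[of "r' - r"] assms by auto

(* Right-continuity and Fatou: approximating h from above by rationals r_n, the increment
   L_(r_n) - L_h has mean square at most sigma2 * (r_n - h). *)
lemma increment_msq_from_above:
  assumes "0 \<le> h" and r: "\<And>n. r n \<in> \<rat>" "\<And>n. h < r n" "r \<longlonglongrightarrow> h"
  shows "integrable M (\<lambda>\<omega>. (L h \<omega> - L (r n) \<omega>)\<^sup>2) \<and>
    expectation (\<lambda>\<omega>. (L h \<omega> - L (r n) \<omega>)\<^sup>2) \<le> sigma2 * (r n - h)"
proof -
  have nonneg: "0 \<le> r k" for k using r(2)[of k] assms(1) by linarith
  have [measurable]: "L (r k) \<in> borel_measurable M" "L h \<in> borel_measurable M" for k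
    using nonneg assms(1) by auto
  have "AE \<omega> in M. (\<lambda>k. L (r k) \<omega>) \<longlonglongrightarrow> L h \<omega>"
  proof (rule eventually_mono[OF cadlag_AE])
    fix \<omega> assume "cadlag_nonneg (\<lambda>t. L t \<omega>)"
    then have "((\<lambda>t. L t \<omega>) \<longlongrightarrow> L h \<omega>) (at_right h)"
      using assms(1) unfolding cadlag_nonneg_def by (simp add: continuous_within)
    moreover have "filterlim r (at_right h) sequentially"
      by (rule tendsto_imp_filterlim_at_right[OF r(3)]) (use r(2) in auto)
    ultimately show "(\<lambda>k. L (r k) \<omega>) \<longlonglongrightarrow> L h \<omega>" by (rule filterlim_compose)
  qed
  moreover have "(\<lambda>k. sigma2 * \<bar>r k - r n\<bar>) \<longlonglongrightarrow> sigma2 * \<bar>h - r n\<bar>"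
    by (intro tendsto_intros r(3))
  moreover have "integrable M (\<lambda>\<omega>. (L (r k) \<omega> - L (r n) \<omega>)\<^sup>2) \<and>
      expectation (\<lambda>\<omega>. (L (r k) \<omega> - L (r n) \<omega>)\<^sup>2) = sigma2 * \<bar>r k - r n\<bar>" for k
    using rational_increment_msq[of "r k" "r n"] rational_increment_msq[of "r n" "r k"]
      r(1) nonneg by (cases "r k \<le> r n") (auto simp: power2_commute)
  ultimately have "integrable M (\<lambda>\<omega>. (L h \<omega> - L (r n) \<omega>)\<^sup>2)"
    "expectation (\<lambda>\<omega>. (L h \<omega> - L (r n) \<omega>)\<^sup>2) \<le> sigma2 * \<bar>h - r n\<bar>"
    using fatou_square_distance_limit[where F="\<lambda>k. L (r k)" and G="L (r n)" and Flim="L h"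
        and B="\<lambda>k. sigma2 * \<bar>r k - r n\<bar>"] by auto
  then show ?thesis using r(2)[of n] by simp
qed

lemma increment_centered:
  assumes "0 \<le> h"
  shows "incr_L2 h \<and> incr_mean h = 0"
proof -
  obtain r where r: "\<And>n. r n \<in> \<rat>" "\<And>n. h < r n" "r \<longlonglongrightarrow> h"
    using rational_approximation_from_above[of h] by blast
  note approx = increment_msq_from_above[OF assms r]
  have nonneg: "0 \<le> r k" for k using r(2)[of k] assms by linarith
  have [measurable]: "L (r k) \<in> borel_measurable M" "L h \<in> borel_measurable M" for k
    using nonneg assms by auto
  have rat: "incr_L2 (r k) \<and> incr_mean (r k) = 0" for k using moments_rational r(1) nonneg by blast
  have "integrable M (\<lambda>\<omega>. ((L h \<omega> - L (r 0) \<omega>) + (L (r 0) \<omega> - L 0 \<omega>))\<^sup>2)"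
    by (rule square_integrable_add) (use approx rat in \<open>auto simp: incr_L2_def\<close>)
  then have L2: "incr_L2 h" unfolding incr_L2_def by simp
  have "(incr_mean h)\<^sup>2 \<le> sigma2 * (r k - h)" for k
  proof -
    have "integrable M (\<lambda>\<omega>. L h \<omega> - L (r k) \<omega>)"
      by (rule square_integrable_imp_integrable) (use approx in auto)
    moreover have "integrable M (\<lambda>\<omega>. L (r k) \<omega> - L 0 \<omega>)"
      using increment_moments(3)[of 0 "r k"] nonneg rat by simp
    ultimately have "incr_mean h = expectation (\<lambda>\<omega>. L h \<omega> - L (r k) \<omega>) + incr_mean (r k)"
      unfolding incr_mean_def by (subst Bochner_Integration.integral_add[symmetric]) auto
    then have "(incr_mean h)\<^sup>2 = (expectation (\<lambda>\<omega>. L h \<omega> - L (r k) \<omega>))\<^sup>2" using rat by simp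
    also have "\<dots> \<le> expectation (\<lambda>\<omega>. (L h \<omega> - L (r k) \<omega>)\<^sup>2)"
      by (rule square_expectation_le) (use approx in auto)
    also have "\<dots> \<le> sigma2 * (r k - h)" using approx by auto
    finally show ?thesis .
  qed
  moreover have "(\<lambda>k. sigma2 * (r k - h)) \<longlonglongrightarrow> sigma2 * (h - h)" by (intro tendsto_intros r(3))
  ultimately have "(incr_mean h)\<^sup>2 \<le> 0" by (intro LIMSEQ_le_const) auto
  then show ?thesis using L2 by simp
qed

(* The mean square is additive, hence squeezed between its values at rationals above h. *)
lemma increment_msq_linear:
  assumes "0 \<le> h"
  shows "incr_msq h = sigma2 * h"
proof -
  obtain r where r: "\<And>n. r n \<in> \<rat>" "\<And>n. h < r n" "r \<longlonglongrightarrow> h"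
    using rational_approximation_from_above[of h] by blast
  have split: "incr_msq (r k) = incr_msq h + incr_msq (r k - h)" for k
    using moments_add[of h "r k - h"] increment_centered[of h] increment_centered[of "r k - h"]
      assms r(2)[of k] by auto
  have rat: "incr_msq (r k) = sigma2 * r k" for k
    using moments_rational r(1) r(2)[of k] assms by auto
  have "incr_msq (r k - h) = expectation (\<lambda>\<omega>. (L h \<omega> - L (r k) \<omega>)\<^sup>2)" for k
    using increment_moments(2)[of h "r k"] increment_centered[of "r k - h"] assms r(2)[of k]
    by (simp add: power2_commute)
  then have tail: "0 \<le> incr_msq (r k - h) \<and> incr_msq (r k - h) \<le> sigma2 * (r k - h)" for k
    using increment_msq_from_above[OF assms r, of k] incr_msq_nonneg by auto
  have bounds: "sigma2 * h \<le> incr_msq h \<and> incr_msq h \<le> sigma2 * r k" for k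
    using split[of k] rat[of k] tail[of k] by (auto simp: right_diff_distrib)
  have "(\<lambda>k. sigma2 * r k) \<longlonglongrightarrow> sigma2 * h" by (intro tendsto_intros r(3))
  then have "incr_msq h \<le> sigma2 * h" by (rule LIMSEQ_le_const) (use bounds in auto)
  then show ?thesis using bounds[of 0] by simp
qed

lemma increment_msq:
  assumes "0 \<le> u" "u \<le> v"
  shows "integrable M (\<lambda>\<omega>. (L v \<omega> - L u \<omega>)\<^sup>2) \<and>
    expectation (\<lambda>\<omega>. (L v \<omega> - L u \<omega>)\<^sup>2) = sigma2 * (v - u)"
  using increment_moments[OF assms] increment_centered[of "v - u"] increment_msq_linear[of "v - u"]
    assms by auto

(* Left limits of the paths coincide a.s. with the values: L_(s_k) -> L_c in mean square
   along s_k -> c from the left, so by Fatou the (existing) left limit equals L_c a.s. *)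
lemma left_limit_AE:
  assumes c: "0 < c"
  shows "AE \<omega> in M. Lim (at_left c) (\<lambda>u. L u \<omega>) = L c \<omega>"
proof -
  define s where "s k = c - c / 2 * inverse (real (Suc k))" for k
  have s_lt: "s k < c" for k using c unfolding s_def by simp
  have s_nonneg: "0 \<le> s k" for k
  proof -
    have "c / 2 * inverse (real (Suc k)) \<le> c / 2 * 1"
      using c by (intro mult_left_mono) (auto simp: inverse_le_1_iff)
    then show ?thesis unfolding s_def using c by simp
  qed
  have s_lim: "s \<longlonglongrightarrow> c"
    using tendsto_diff[OF tendsto_const[of c] tendsto_mult_left[OF LIMSEQ_inverse_real_of_nat, of "c / 2"]]
    unfolding s_def by simp
  have [measurable]: "L (s k) \<in> borel_measurable M" "L c \<in> borel_measurable M" for k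
    using s_nonneg c by auto
  have msq: "integrable M (\<lambda>\<omega>. (L (s k) \<omega> - L c \<omega>)\<^sup>2) \<and>
     expectation (\<lambda>\<omega>. (L (s k) \<omega> - L c \<omega>)\<^sup>2) = sigma2 * (c - s k)" for k
    using increment_msq[of "s k" c] s_nonneg[of k] s_lt[of k] by (simp add: power2_commute)
  have "(\<lambda>k. sigma2 * (c - s k)) \<longlonglongrightarrow> sigma2 * (c - c)" by (intro tendsto_intros s_lim)
  then have "(\<integral>\<^sup>+\<omega>. liminf (\<lambda>k. ennreal ((L (s k) \<omega> - L c \<omega>)\<^sup>2)) \<partial>M) \<le> ennreal (sigma2 * (c - c))"
    by (intro fatou_square_distance[where B="\<lambda>k. sigma2 * (c - s k)"]) (use msq in auto)
  then have "(\<integral>\<^sup>+\<omega>. liminf (\<lambda>k. ennreal ((L (s k) \<omega> - L c \<omega>)\<^sup>2)) \<partial>M) = 0" by simp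
  then have "AE \<omega> in M. liminf (\<lambda>k. ennreal ((L (s k) \<omega> - L c \<omega>)\<^sup>2)) = 0"
    by (subst (asm) nn_integral_0_iff_AE) auto
  then show ?thesis
  proof (rule eventually_mono[OF eventually_conj[OF _ cadlag_AE]], elim conjE)
    fix \<omega> assume lim0: "liminf (\<lambda>k. ennreal ((L (s k) \<omega> - L c \<omega>)\<^sup>2)) = 0"
      and "cadlag_nonneg (\<lambda>t. L t \<omega>)"
    then obtain l where l: "((\<lambda>u. L u \<omega>) \<longlongrightarrow> l) (at_left c)"
      using c unfolding cadlag_nonneg_def by blast
    have "filterlim s (at_left c) sequentially"
      by (rule tendsto_imp_filterlim_at_left[OF s_lim]) (use s_lt in auto)
    with l have "(\<lambda>k. L (s k) \<omega>) \<longlonglongrightarrow> l" by (rule filterlim_compose)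
    then have "(\<lambda>k. ennreal ((L (s k) \<omega> - L c \<omega>)\<^sup>2)) \<longlonglongrightarrow> ennreal ((l - L c \<omega>)\<^sup>2)"
      by (intro tendsto_ennrealI tendsto_intros)
    then have "ennreal ((l - L c \<omega>)\<^sup>2) = 0"
      using lim0 by (metis lim_imp_Liminf sequentially_bot)
    then have "l = L c \<omega>" by (simp add: ennreal_eq_0_iff)
    then show "Lim (at_left c) (\<lambda>u. L u \<omega>) = L c \<omega>" using l by (intro tendsto_Lim) auto
  qed
qed

end

lemma path_nonneg_measurable:
  assumes "levy_process M L"
  shows "path_nonneg L \<in> measurable M (Pi\<^sub>M {0..} (\<lambda>_. borel))"
proof -
  interpret levy_proc M L by (rule levy_proc.intro) fact
  show ?thesis unfolding path_nonneg_def by (intro measurable_restrict) auto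
qed

lemma path_nonneg_eval: "0 \<le> u \<Longrightarrow> path_nonneg L \<omega> u = L u \<omega>"
  unfolding path_nonneg_def by simp

lemma increment_functional_measurable:
  "0 \<le> (u::real) \<Longrightarrow> (\<lambda>f. f u - f 0 :: real) \<in> borel_measurable (Pi\<^sub>M {0..} (\<lambda>_. borel))"
  by (intro borel_measurable_diff measurable_component_singleton) auto

locale two_sided_levy =
  fixes M :: "'a measure" and L1 L2 :: "real \<Rightarrow> 'a \<Rightarrow> real"
  assumes levy1: "levy_process M L1" and levy2: "levy_process M L2"
    and iid: "iid_processes M L1 L2"
    and square_integrable_L1: "integrable M (\<lambda>\<omega>. (L1 1 \<omega>)\<^sup>2)"
    and mean_L1: "(\<integral>\<omega>. L1 1 \<omega> \<partial>M) = 0"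
begin

interpretation P1: levy_proc M L1 by unfold_locales (rule levy1)
interpretation P2: levy_proc M L2 by unfold_locales (rule levy2)

lemma increments_same_law:
  "distr M borel (\<lambda>\<omega>. L1 1 \<omega> - L1 0 \<omega>) = distr M borel (\<lambda>\<omega>. L2 1 \<omega> - L2 0 \<omega>)"
proof -
  let ?P = "Pi\<^sub>M {0..} (\<lambda>_. borel :: real measure)"
  let ?\<phi> = "\<lambda>f. f 1 - f 0 :: real"
  have "distr M ?P (path_nonneg L1) = distr M ?P (path_nonneg L2)"
    using iid unfolding iid_processes_def by blast
  then have "distr M borel (?\<phi> \<circ> path_nonneg L1) = distr M borel (?\<phi> \<circ> path_nonneg L2)"
    using distr_distr[OF increment_functional_measurable path_nonneg_measurable[OF levy1]]
      distr_distr[OF increment_functional_measurable path_nonneg_measurable[OF levy2]] by simp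
  then show ?thesis by (simp add: comp_def path_nonneg_eval)
qed

lemma increments_indep:
  assumes "0 \<le> u" "0 \<le> w"
  shows "P1.indep_var borel (\<lambda>\<omega>. L1 u \<omega> - L1 0 \<omega>) borel (\<lambda>\<omega>. L2 w \<omega> - L2 0 \<omega>)"
proof -
  have "P1.indep_var (Pi\<^sub>M {0..} (\<lambda>_. borel)) (path_nonneg L1) (Pi\<^sub>M {0..} (\<lambda>_. borel)) (path_nonneg L2)"
    using iid unfolding iid_processes_def by blast
  from P1.indep_var_compose[OF this increment_functional_measurable increment_functional_measurable]
  show ?thesis using assms by (simp add: comp_def path_nonneg_eval)
qed

(* As L1_0 = 0 a.s., the hypotheses on L1_1 concern the increment L1_1 - L1_0; by equality in
   law they transfer to L2, so both processes are centred Levy processes with the same sigma2. *)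
lemma L1_centered:
  "integrable M (\<lambda>\<omega>. (L1 1 \<omega> - L1 0 \<omega>)\<^sup>2)" "(\<integral>\<omega>. L1 1 \<omega> - L1 0 \<omega> \<partial>M) = 0"
proof -
  have ae: "AE \<omega> in M. L1 1 \<omega> = L1 1 \<omega> - L1 0 \<omega>" by (rule eventually_mono[OF P1.L_0_AE]) simp
  show "integrable M (\<lambda>\<omega>. (L1 1 \<omega> - L1 0 \<omega>)\<^sup>2)"
  proof (rule integrable_cong_AE_imp[OF square_integrable_L1])
    show "AE \<omega> in M. (L1 1 \<omega>)\<^sup>2 = (L1 1 \<omega> - L1 0 \<omega>)\<^sup>2" using ae by (rule eventually_mono) simp
  qed simp
  have "(\<integral>\<omega>. L1 1 \<omega> \<partial>M) = (\<integral>\<omega>. L1 1 \<omega> - L1 0 \<omega> \<partial>M)"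
    by (rule integral_cong_AE[OF _ _ ae]) auto
  then show "(\<integral>\<omega>. L1 1 \<omega> - L1 0 \<omega> \<partial>M) = 0" using mean_L1 by simp
qed

lemma increments_measurable:
  "(\<lambda>\<omega>. L1 1 \<omega> - L1 0 \<omega>) \<in> borel_measurable M" "(\<lambda>\<omega>. L2 1 \<omega> - L2 0 \<omega>) \<in> borel_measurable M"
  by auto

lemmas increment_moments_transfer = integral_eq_if_distr_eq[OF increments_measurable increments_same_law]

lemma L2_centered:
  "integrable M (\<lambda>\<omega>. (L2 1 \<omega> - L2 0 \<omega>)\<^sup>2)" "(\<integral>\<omega>. L2 1 \<omega> - L2 0 \<omega> \<partial>M) = 0"
  using increment_moments_transfer(1)[of "\<lambda>x. x\<^sup>2"] increment_moments_transfer(2)[of "\<lambda>x. x"]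
    L1_centered by simp_all

sublocale A: centered_levy M L1 by unfold_locales (rule levy1, rule L1_centered(1), rule L1_centered(2))
sublocale B: centered_levy M L2 by unfold_locales (rule levy2, rule L2_centered(1), rule L2_centered(2))

lemma sigma2_eq: "B.sigma2 = A.sigma2"
  using increment_moments_transfer(2)[of "\<lambda>x. x\<^sup>2"]
  unfolding A.sigma2_def B.sigma2_def A.incr_msq_def B.incr_msq_def by simp

(* The two-sided process re-based at 0 and with left limits replaced by values.  At each
   fixed time it agrees a.s. with two_sided L1 L2 (lemma two_sided_AE_eq_Lts). *)
definition Lts :: "real \<Rightarrow> 'a \<Rightarrow> real" where
  "Lts t \<omega> = (if 0 \<le> t then L1 t \<omega> - L1 0 \<omega> else L2 0 \<omega> - L2 (- t) \<omega>)"

lemma Lts_measurable [measurable]: "Lts t \<in> borel_measurable M"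
  unfolding Lts_def by (cases "0 \<le> t") auto

lemma two_sided_AE_eq_Lts: "AE \<omega> in M. two_sided L1 L2 t \<omega> = Lts t \<omega>"
proof (cases "0 \<le> t")
  case True
  show ?thesis by (rule eventually_mono[OF P1.L_0_AE]) (use True in \<open>simp add: two_sided_def Lts_def\<close>)
next
  case False
  have "AE \<omega> in M. Lim (at_left (- t)) (\<lambda>u. L2 u \<omega>) = L2 (- t) \<omega>"
    by (rule B.left_limit_AE) (use False in simp)
  then show ?thesis
    by (rule eventually_mono[OF eventually_conj[OF P2.L_0_AE]]) (use False in \<open>simp add: two_sided_def Lts_def\<close>)
qed

(* The increments of Lts are square integrable with E(Lts_u - Lts_v)^2 = sigma2 |u - v|; when
   the interval straddles 0 this uses independence of L1 and L2. *)
lemma Lts_increment_msq_ordered: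
  assumes "v \<le> u"
  shows "integrable M (\<lambda>\<omega>. (Lts u \<omega> - Lts v \<omega>)\<^sup>2) \<and>
    (\<integral>\<omega>. (Lts u \<omega> - Lts v \<omega>)\<^sup>2 \<partial>M) = A.sigma2 * (u - v)"
proof -
  consider "0 \<le> v" | "u < 0" | "v < 0" "0 \<le> u" using assms by linarith
  then show ?thesis
  proof cases
    case 1
    then show ?thesis using A.increment_msq[of v u] assms by (simp add: Lts_def)
  next
    case 2
    then have "Lts u \<omega> - Lts v \<omega> = L2 (- v) \<omega> - L2 (- u) \<omega>" for \<omega> using assms by (simp add: Lts_def)
    then show ?thesis using B.increment_msq[of "- u" "- v"] 2 assms sigma2_eq by simp
  next
    case 3
    define X where "X = (\<lambda>\<omega>. L1 u \<omega> - L1 0 \<omega>)"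
    define Y where "Y = (\<lambda>\<omega>. L2 (- v) \<omega> - L2 0 \<omega>)"
    have sum: "Lts u \<omega> - Lts v \<omega> = X \<omega> + Y \<omega>" for \<omega> using 3 by (simp add: Lts_def X_def Y_def)
    have X: "integrable M (\<lambda>\<omega>. (X \<omega>)\<^sup>2)" "(\<integral>\<omega>. (X \<omega>)\<^sup>2 \<partial>M) = A.sigma2 * u" "(\<integral>\<omega>. X \<omega> \<partial>M) = 0"
      using A.increment_msq[of 0 u] A.increment_centered[of u] 3
      unfolding X_def A.incr_mean_def by auto
    have Y: "integrable M (\<lambda>\<omega>. (Y \<omega>)\<^sup>2)" "(\<integral>\<omega>. (Y \<omega>)\<^sup>2 \<partial>M) = A.sigma2 * (- v)" "(\<integral>\<omega>. Y \<omega> \<partial>M) = 0"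
      using B.increment_msq[of 0 "- v"] B.increment_centered[of "- v"] 3 sigma2_eq
      unfolding Y_def B.incr_mean_def by auto
    have "P1.indep_var borel X borel Y" unfolding X_def Y_def by (rule increments_indep) (use 3 in auto)
    from P1.indep_sum_square_moments[OF this X(1) Y(1)] show ?thesis
      unfolding sum using X Y by (simp add: algebra_simps)
  qed
qed

lemma Lts_increment_msq:
  "integrable M (\<lambda>\<omega>. (Lts u \<omega> - Lts v \<omega>)\<^sup>2) \<and>
    (\<integral>\<omega>. (Lts u \<omega> - Lts v \<omega>)\<^sup>2 \<partial>M) = A.sigma2 * \<bar>u - v\<bar>"
  using Lts_increment_msq_ordered[of u v] Lts_increment_msq_ordered[of v u]
  by (cases "v \<le> u") (auto simp: power2_commute)

end

(* Length of the overlap of (a,b] and (c,d], written in a symmetric form which is also the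
   covariance of the increments over these intervals of a process with E(Z_u - Z_v)^2 = |u - v|. *)
definition overlap :: "real \<Rightarrow> real \<Rightarrow> real \<Rightarrow> real \<Rightarrow> real" where
  "overlap a b c d = (\<bar>b - c\<bar> + \<bar>a - d\<bar> - \<bar>b - d\<bar> - \<bar>a - c\<bar>) / 2"

lemma interval_overlap_integral:
  fixes a b c d :: real
  shows "integrable lborel (\<lambda>x. indicator {a<..b} x * indicator {c<..d} x :: real)"
    and "a \<le> b \<Longrightarrow> c \<le> d \<Longrightarrow>
      (\<integral>x. indicator {a<..b} x * indicator {c<..d} x \<partial>lborel :: real) = overlap a b c d"
proof -
  have inter: "(\<lambda>x. indicator {a<..b} x * indicator {c<..d} x :: real) = indicator {max a c<..min b d}"
    by (auto simp: indicator_def fun_eq_iff)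
  show "integrable lborel (\<lambda>x. indicator {a<..b} x * indicator {c<..d} x :: real)"
    unfolding inter by (cases "max a c \<le> min b d") auto
  assume "a \<le> b" "c \<le> d"
  then show "(\<integral>x. indicator {a<..b} x * indicator {c<..d} x \<partial>lborel :: real) = overlap a b c d"
    unfolding inter overlap_def
    by (cases "max a c \<le> min b d") (auto simp: abs_if min_def max_def split: if_splits)
qed

context two_sided_levy
begin

(* Polarisation of the mean-square formula gives the covariance of two increments. *)
lemma Lts_covariance:
  "integrable M (\<lambda>\<omega>. (Lts b \<omega> - Lts a \<omega>) * (Lts d \<omega> - Lts c \<omega>)) \<and>
   (\<integral>\<omega>. (Lts b \<omega> - Lts a \<omega>) * (Lts d \<omega> - Lts c \<omega>) \<partial>M) = A.sigma2 * overlap a b c d"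
proof -
  have polar: "(\<lambda>\<omega>. (Lts b \<omega> - Lts a \<omega>) * (Lts d \<omega> - Lts c \<omega>)) = (\<lambda>\<omega>.
     ((Lts b \<omega> - Lts c \<omega>)\<^sup>2 + (Lts a \<omega> - Lts d \<omega>)\<^sup>2 - (Lts b \<omega> - Lts d \<omega>)\<^sup>2 - (Lts a \<omega> - Lts c \<omega>)\<^sup>2) / 2)"
    by (auto simp: power2_eq_square field_simps)
  show ?thesis unfolding polar overlap_def
    using Lts_increment_msq[of b c] Lts_increment_msq[of a d] Lts_increment_msq[of b d]
      Lts_increment_msq[of a c]
    by (simp add: Bochner_Integration.integral_diff Bochner_Integration.integral_add algebra_simps)
qed

lemma Lts_isometry:
  fixes I :: "'i set" and c u v :: "'i \<Rightarrow> real"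
  assumes fin: "finite I" and uv: "\<And>i. i \<in> I \<Longrightarrow> u i \<le> v i"
  shows "integrable M (\<lambda>\<omega>. (\<Sum>i\<in>I. c i * (Lts (v i) \<omega> - Lts (u i) \<omega>))\<^sup>2)"
    "integrable lborel (\<lambda>x. (\<Sum>i\<in>I. c i * indicator {u i<..v i} x)\<^sup>2 :: real)"
    "(\<integral>\<omega>. (\<Sum>i\<in>I. c i * (Lts (v i) \<omega> - Lts (u i) \<omega>))\<^sup>2 \<partial>M) =
       A.sigma2 * (\<integral>x. (\<Sum>i\<in>I. c i * indicator {u i<..v i} x)\<^sup>2 \<partial>lborel)"
proof -
  have expandM: "(\<lambda>\<omega>. (\<Sum>i\<in>I. c i * (Lts (v i) \<omega> - Lts (u i) \<omega>))\<^sup>2) =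
    (\<lambda>\<omega>. \<Sum>i\<in>I. \<Sum>j\<in>I. c i * c j * ((Lts (v i) \<omega> - Lts (u i) \<omega>) * (Lts (v j) \<omega> - Lts (u j) \<omega>)))"
    by (simp add: power2_eq_square sum_product mult_ac)
  have expandL: "(\<lambda>x. (\<Sum>i\<in>I. c i * indicator {u i<..v i} x)\<^sup>2 :: real) =
    (\<lambda>x. \<Sum>i\<in>I. \<Sum>j\<in>I. c i * c j * (indicator {u i<..v i} x * indicator {u j<..v j} x))"
    by (simp add: power2_eq_square sum_product mult_ac)
  note covM = Lts_covariance
  note intL = interval_overlap_integral(1)
  have covL: "i \<in> I \<Longrightarrow> j \<in> I \<Longrightarrow>
      (\<integral>x. indicator {u i<..v i} x * indicator {u j<..v j} x \<partial>lborel :: real) = overlap (u i) (v i) (u j) (v j)"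
    for i j using interval_overlap_integral(2) uv by simp
  show "integrable M (\<lambda>\<omega>. (\<Sum>i\<in>I. c i * (Lts (v i) \<omega> - Lts (u i) \<omega>))\<^sup>2)"
    unfolding expandM using covM by auto
  show "integrable lborel (\<lambda>x. (\<Sum>i\<in>I. c i * indicator {u i<..v i} x)\<^sup>2 :: real)"
    unfolding expandL using intL by auto
  have "(\<integral>\<omega>. (\<Sum>i\<in>I. c i * (Lts (v i) \<omega> - Lts (u i) \<omega>))\<^sup>2 \<partial>M) =
      (\<Sum>i\<in>I. \<Sum>j\<in>I. c i * c j * (A.sigma2 * overlap (u i) (v i) (u j) (v j)))"
    unfolding expandM using covM by (simp add: Bochner_Integration.integral_sum Bochner_Integration.integrable_sum)
  also have "\<dots> = A.sigma2 * (\<Sum>i\<in>I. \<Sum>j\<in>I. c i * c j * overlap (u i) (v i) (u j) (v j))"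
    by (simp add: sum_distrib_left mult_ac)
  also have "(\<Sum>i\<in>I. \<Sum>j\<in>I. c i * c j * overlap (u i) (v i) (u j) (v j)) =
      (\<integral>x. (\<Sum>i\<in>I. c i * indicator {u i<..v i} x)\<^sup>2 \<partial>lborel)"
    unfolding expandL using intL covL
    by (simp add: Bochner_Integration.integral_sum Bochner_Integration.integrable_sum)
  finally show "(\<integral>\<omega>. (\<Sum>i\<in>I. c i * (Lts (v i) \<omega> - Lts (u i) \<omega>))\<^sup>2 \<partial>M) =
       A.sigma2 * (\<integral>x. (\<Sum>i\<in>I. c i * indicator {u i<..v i} x)\<^sup>2 \<partial>lborel)" .
qed

(* The isometry for the difference of two step-function integrals: concatenate the two
   families of intervals, the second one with negated coefficients. *)
lemma step_difference_isometry:
  assumes s: "\<And>i. i < n \<Longrightarrow> s i < s (Suc i)" and s': "\<And>i. i < n' \<Longrightarrow> s' i < s' (Suc i)"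
  shows "integrable M (\<lambda>\<omega>. (step_int Lts n a s \<omega> - step_int Lts n' a' s' \<omega>)\<^sup>2)"
    "integrable lborel (\<lambda>x. (step_fn n a s x - step_fn n' a' s' x)\<^sup>2)"
    "(\<integral>\<omega>. (step_int Lts n a s \<omega> - step_int Lts n' a' s' \<omega>)\<^sup>2 \<partial>M) =
      A.sigma2 * (\<integral>x. (step_fn n a s x - step_fn n' a' s' x)\<^sup>2 \<partial>lborel)"
proof -
  define I where "I = {..<n} <+> {..<n'}"
  define c where "c = case_sum a (\<lambda>i. - a' i)"
  define u where "u = case_sum s s'"
  define v where "v = case_sum (\<lambda>i. s (Suc i)) (\<lambda>i. s' (Suc i))"
  have uv: "\<And>i. i \<in> I \<Longrightarrow> u i \<le> v i" unfolding I_def u_def v_def using s s'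
    by (auto intro: less_imp_le)
  have "step_int Lts n a s \<omega> - step_int Lts n' a' s' \<omega> = (\<Sum>i\<in>I. c i * (Lts (v i) \<omega> - Lts (u i) \<omega>))" for \<omega>
    unfolding I_def step_int_def c_def u_def v_def by (simp add: sum.Plus sum_negf)
  moreover have "step_fn n a s x - step_fn n' a' s' x = (\<Sum>i\<in>I. c i * indicator {u i<..v i} x)" for x
    unfolding I_def step_fn_def c_def u_def v_def
    by (simp only: sum.Plus[OF finite_lessThan finite_lessThan] comp_def sum.case mult_minus_left
        sum_negf diff_conv_add_uminus)
  ultimately show "integrable M (\<lambda>\<omega>. (step_int Lts n a s \<omega> - step_int Lts n' a' s' \<omega>)\<^sup>2)"
    "integrable lborel (\<lambda>x. (step_fn n a s x - step_fn n' a' s' x)\<^sup>2)"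
    "(\<integral>\<omega>. (step_int Lts n a s \<omega> - step_int Lts n' a' s' \<omega>)\<^sup>2 \<partial>M) =
      A.sigma2 * (\<integral>x. (step_fn n a s x - step_fn n' a' s' x)\<^sup>2 \<partial>lborel)"
    using Lts_isometry[of I u v c] uv unfolding I_def by auto
qed

(* A step-function integral only evaluates the process at finitely many times. *)
lemma step_int_AE_eq_Lts: "AE \<omega> in M. step_int (two_sided L1 L2) n a s \<omega> = step_int Lts n a s \<omega>"
proof -
  have "AE \<omega> in M. \<forall>t\<in>s ` {..n}. two_sided L1 L2 t \<omega> = Lts t \<omega>"
    by (rule eventually_ball_finite) (auto intro: two_sided_AE_eq_Lts)
  then show ?thesis by (rule eventually_mono) (auto simp: step_int_def intro!: sum.cong)
qed

lemma levy_integral_Lts: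
  assumes "levy_integral M (two_sided L1 L2) f X"
  obtains N A S where "X \<in> borel_measurable M"
    "\<And>k i. i < N k \<Longrightarrow> S k i < S k (Suc i)"
    "\<And>k. integrable lborel (\<lambda>x. (step_fn (N k) (A k) (S k) x - f x)\<^sup>2)"
    "(\<lambda>k. LINT x|lborel. (step_fn (N k) (A k) (S k) x - f x)\<^sup>2) \<longlonglongrightarrow> 0"
    "\<And>k. integrable M (\<lambda>\<omega>. (step_int Lts (N k) (A k) (S k) \<omega> - X \<omega>)\<^sup>2)"
    "(\<lambda>k. LINT \<omega>|M. (step_int Lts (N k) (A k) (S k) \<omega> - X \<omega>)\<^sup>2) \<longlonglongrightarrow> 0"
proof -
  from assms obtain N A S where X[measurable]: "X \<in> borel_measurable M" and
    incr: "\<forall>k. \<forall>i<N k. S k i < S k (Suc i)" and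
    fn: "\<forall>k. integrable lborel (\<lambda>x. (step_fn (N k) (A k) (S k) x - f x)\<^sup>2)"
      "(\<lambda>k. LINT x|lborel. (step_fn (N k) (A k) (S k) x - f x)\<^sup>2) \<longlonglongrightarrow> 0" and
    int: "\<forall>k. integrable M (\<lambda>\<omega>. (step_int (two_sided L1 L2) (N k) (A k) (S k) \<omega> - X \<omega>)\<^sup>2)"
      "(\<lambda>k. LINT \<omega>|M. (step_int (two_sided L1 L2) (N k) (A k) (S k) \<omega> - X \<omega>)\<^sup>2) \<longlonglongrightarrow> 0"
    unfolding levy_integral_def by blast
  have ae: "AE \<omega> in M. (step_int (two_sided L1 L2) (N k) (A k) (S k) \<omega> - X \<omega>)\<^sup>2 =
      (step_int Lts (N k) (A k) (S k) \<omega> - X \<omega>)\<^sup>2" for k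
    using step_int_AE_eq_Lts[of "N k" "A k" "S k"] by (rule eventually_mono) simp
  have meas: "(\<lambda>\<omega>. (step_int Lts (N k) (A k) (S k) \<omega> - X \<omega>)\<^sup>2) \<in> borel_measurable M" for k
    unfolding step_int_def by measurable
  have "integrable M (\<lambda>\<omega>. (step_int Lts (N k) (A k) (S k) \<omega> - X \<omega>)\<^sup>2)" for k
    by (rule integrable_cong_AE_imp[OF int(1)[rule_format] meas ae])
  moreover have "(LINT \<omega>|M. (step_int (two_sided L1 L2) (N k) (A k) (S k) \<omega> - X \<omega>)\<^sup>2) =
      (LINT \<omega>|M. (step_int Lts (N k) (A k) (S k) \<omega> - X \<omega>)\<^sup>2)" for k
    by (rule integral_cong_AE[OF borel_measurable_integrable[OF int(1)[rule_format]] meas ae])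
  ultimately show ?thesis using that[of N S A] X incr fn int by auto
qed

lemma levy_integral_L2_bound:
  assumes X: "levy_integral M (two_sided L1 L2) f X" and Y: "levy_integral M (two_sided L1 L2) g Y"
    and meas: "f \<in> borel_measurable borel" "g \<in> borel_measurable borel"
  shows "integrable M (\<lambda>\<omega>. (X \<omega> - Y \<omega>)\<^sup>2)"
    "(\<integral>\<omega>. (X \<omega> - Y \<omega>)\<^sup>2 \<partial>M) \<le> 9 * A.sigma2 * (\<integral>x. (f x - g x)\<^sup>2 \<partial>lborel)"
proof -
  obtain N S A where measX: "X \<in> borel_measurable M" and
    S: "\<And>k i. i < N k \<Longrightarrow> S k i < S k (Suc i)" and
    fL: "\<And>k. integrable lborel (\<lambda>x. (step_fn (N k) (A k) (S k) x - f x)\<^sup>2)"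
      "(\<lambda>k. LINT x|lborel. (step_fn (N k) (A k) (S k) x - f x)\<^sup>2) \<longlonglongrightarrow> 0" and
    XM: "\<And>k. integrable M (\<lambda>\<omega>. (step_int Lts (N k) (A k) (S k) \<omega> - X \<omega>)\<^sup>2)"
      "(\<lambda>k. LINT \<omega>|M. (step_int Lts (N k) (A k) (S k) \<omega> - X \<omega>)\<^sup>2) \<longlonglongrightarrow> 0"
    by (rule levy_integral_Lts[OF X]) blast
  obtain N' S' A' where measY: "Y \<in> borel_measurable M" and
    S': "\<And>k i. i < N' k \<Longrightarrow> S' k i < S' k (Suc i)" and
    gL: "\<And>k. integrable lborel (\<lambda>x. (step_fn (N' k) (A' k) (S' k) x - g x)\<^sup>2)"
      "(\<lambda>k. LINT x|lborel. (step_fn (N' k) (A' k) (S' k) x - g x)\<^sup>2) \<longlonglongrightarrow> 0" and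
    YM: "\<And>k. integrable M (\<lambda>\<omega>. (step_int Lts (N' k) (A' k) (S' k) \<omega> - Y \<omega>)\<^sup>2)"
      "(\<lambda>k. LINT \<omega>|M. (step_int Lts (N' k) (A' k) (S' k) \<omega> - Y \<omega>)\<^sup>2) \<longlonglongrightarrow> 0"
    by (rule levy_integral_Lts[OF Y]) blast
  have step_int_measurable: "step_int Lts n a s \<in> borel_measurable M" for n a s
    unfolding step_int_def by measurable
  have step_fn_measurable: "step_fn n a s \<in> borel_measurable borel" for n a s
    unfolding step_fn_def by measurable
  have iso: "integrable M (\<lambda>\<omega>. (step_int Lts (N k) (A k) (S k) \<omega> - step_int Lts (N' k) (A' k) (S' k) \<omega>)\<^sup>2)"
    "integrable lborel (\<lambda>x. (step_fn (N k) (A k) (S k) x - step_fn (N' k) (A' k) (S' k) x)\<^sup>2)"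
    "(\<integral>\<omega>. (step_int Lts (N k) (A k) (S k) \<omega> - step_int Lts (N' k) (A' k) (S' k) \<omega>)\<^sup>2 \<partial>M) =
      A.sigma2 * (\<integral>x. (step_fn (N k) (A k) (S k) x - step_fn (N' k) (A' k) (S' k) x)\<^sup>2 \<partial>lborel)" for k
    using step_difference_isometry[of "N k" "S k" "N' k" "S' k" "A k" "A' k"] S S' by auto
  note bound = isometric_approximation_bound[where IX="\<lambda>k. step_int Lts (N k) (A k) (S k)"
      and IY="\<lambda>k. step_int Lts (N' k) (A' k) (S' k)" and sf="\<lambda>k. step_fn (N k) (A k) (S k)"
      and sg="\<lambda>k. step_fn (N' k) (A' k) (S' k)" and f=f and g=g and N=lborel and c=A.sigma2]
  note hyps = XM YM fL gL iso A.sigma2_nonneg step_int_measurable step_fn_measurable measX measY meas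
  show "integrable M (\<lambda>\<omega>. (X \<omega> - Y \<omega>)\<^sup>2)" by (rule bound(1); simp add: hyps)
  show "(\<integral>\<omega>. (X \<omega> - Y \<omega>)\<^sup>2 \<partial>M) \<le> 9 * A.sigma2 * (\<integral>x. (f x - g x)\<^sup>2 \<partial>lborel)"
    by (rule bound(2); simp add: hyps)
qed
end

lemma f_H_measurable [measurable]: "f_H H r \<in> borel_measurable borel"
  unfolding f_H_def by measurable

lemma max_powr_scale:
  fixes h y \<alpha> :: real
  assumes "0 < h"
  shows "max (h * y) 0 powr \<alpha> = h powr \<alpha> * max y 0 powr \<alpha>"
proof (cases "0 \<le> y")
  case True
  then show ?thesis using assms by (simp add: powr_mult)
next
  case False
  then have "h * y < 0" using assms by (simp add: mult_pos_neg)
  then show ?thesis using False by simp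
qed

(* Self-similarity of the Mandelbrot-Van Ness kernel: the substitution x = b + (a - b) y maps
   f_H(a,.) - f_H(b,.) to (a - b)^(H - 1/2) (f_H(1,.) - f_H(0,.)), so the squared L^2 norm of the
   kernel increment scales like (a - b)^(2H). *)
lemma f_H_increment_scaling:
  assumes "b < a"
  shows "(\<integral>x. (f_H H a x - f_H H b x)\<^sup>2 \<partial>lborel) =
    (a - b) powr (2 * H) * (\<integral>x. (f_H H 1 x - f_H H 0 x)\<^sup>2 \<partial>lborel)"
proof -
  define h where "h = a - b"
  have h: "0 < h" using assms unfolding h_def by simp
  define \<alpha> where "\<alpha> = H - 1/2"
  have pointwise: "(f_H H a (b + h * x) - f_H H b (b + h * x))\<^sup>2 = h powr (2 * \<alpha>) * (f_H H 1 x - f_H H 0 x)\<^sup>2" for x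
  proof -
    have "a - (b + h * x) = h * (1 - x)" "b - (b + h * x) = h * (- x)" unfolding h_def by (auto simp: algebra_simps)
    then have "f_H H a (b + h * x) - f_H H b (b + h * x) =
        C_H H * (max (h * (1 - x)) 0 powr \<alpha> - max (h * (- x)) 0 powr \<alpha>)"
      unfolding f_H_def \<alpha>_def by (simp add: algebra_simps)
    also have "\<dots> = h powr \<alpha> * (f_H H 1 x - f_H H 0 x)"
      unfolding f_H_def \<alpha>_def max_powr_scale[OF h] by (simp add: algebra_simps)
    finally have scaled: "f_H H a (b + h * x) - f_H H b (b + h * x) = h powr \<alpha> * (f_H H 1 x - f_H H 0 x)" .
    have "(h powr \<alpha>)\<^sup>2 = h powr (2 * \<alpha>)"
      using h by (simp add: power2_eq_square powr_add[symmetric])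
    then show ?thesis unfolding scaled by (simp add: power_mult_distrib)
  qed
  have "(\<integral>x. (f_H H a x - f_H H b x)\<^sup>2 \<partial>lborel) = \<bar>h\<bar> *\<^sub>R (\<integral>x. (f_H H a (b + h * x) - f_H H b (b + h * x))\<^sup>2 \<partial>lborel)"
    by (rule lborel_integral_real_affine) (use h in simp)
  also have "\<dots> = (h * h powr (2 * \<alpha>)) * (\<integral>x. (f_H H 1 x - f_H H 0 x)\<^sup>2 \<partial>lborel)"
    using h by (simp add: pointwise)
  also have "h * h powr (2 * \<alpha>) = h powr (2 * H)"
    using h powr_add[of h 1 "2 * \<alpha>"] unfolding \<alpha>_def by (simp add: algebra_simps)
  finally show ?thesis unfolding h_def .
qed

context two_sided_levy
begin

lemma fractional_levy_increment_bound:
  assumes X: "\<forall>r. levy_integral M (two_sided L1 L2) (f_H H r) (X r)" and "b < a"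
  shows "integrable M (\<lambda>\<omega>. (X a \<omega> - X b \<omega>)\<^sup>2)"
    "(\<integral>\<omega>. (X a \<omega> - X b \<omega>)\<^sup>2 \<partial>M) \<le>
      9 * A.sigma2 * (\<integral>x. (f_H H 1 x - f_H H 0 x)\<^sup>2 \<partial>lborel) * (a - b) powr (2 * H)"
proof -
  have "levy_integral M (two_sided L1 L2) (f_H H a) (X a)" "levy_integral M (two_sided L1 L2) (f_H H b) (X b)"
    using X by blast+
  note bound = levy_integral_L2_bound[OF this f_H_measurable f_H_measurable]
  show "integrable M (\<lambda>\<omega>. (X a \<omega> - X b \<omega>)\<^sup>2)" by (rule bound(1))
  show "(\<integral>\<omega>. (X a \<omega> - X b \<omega>)\<^sup>2 \<partial>M) \<le>
      9 * A.sigma2 * (\<integral>x. (f_H H 1 x - f_H H 0 x)\<^sup>2 \<partial>lborel) * (a - b) powr (2 * H)"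
    using bound(2) unfolding f_H_increment_scaling[OF \<open>b < a\<close>] by (simp add: mult_ac)
qed

end

(* Dyadic partitions: 2^n intervals of length d / 2^n. *)
lemma dyadic_powr_sum:
  fixes d \<gamma> :: real
  assumes "0 < d"
  shows "2 ^ n * (d / 2 ^ n) powr \<gamma> = d powr \<gamma> * (2 powr (1 - \<gamma>)) ^ n"
proof -
  have pow: "(2::real) ^ n = 2 powr real n" by (simp add: powr_realpow)
  have "2 ^ n * (d / 2 ^ n) powr \<gamma> = d powr \<gamma> * (2 powr real n / 2 powr (real n * \<gamma>))"
    using assms by (simp add: pow powr_divide powr_powr)
  also have "2 powr real n / 2 powr (real n * \<gamma>) = (2 powr (1 - \<gamma>)) powr real n"
    by (simp add: powr_diff[symmetric] powr_powr algebra_simps)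
  also have "\<dots> = (2 powr (1 - \<gamma>)) ^ n" by (simp add: powr_realpow)
  finally show ?thesis .
qed

(* A first Borel-Cantelli type argument: non-negative random variables whose expectations
   are dominated by a summable sequence have an a.s. finite sum, hence tend to 0 a.s. *)
lemma AE_tendsto_zero_if_summable_integrals:
  fixes Q :: "nat \<Rightarrow> 'a \<Rightarrow> real" and b :: "nat \<Rightarrow> real"
  assumes [measurable]: "\<And>n. Q n \<in> borel_measurable M"
    and nonneg: "\<And>n \<omega>. 0 \<le> Q n \<omega>" and int: "\<And>n. integrable M (Q n)"
    and le: "\<And>n. (\<integral>\<omega>. Q n \<omega> \<partial>M) \<le> b n" and summable: "summable b"
  shows "AE \<omega> in M. (\<lambda>n. Q n \<omega>) \<longlonglongrightarrow> 0"
proof -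
  have b_nonneg: "0 \<le> b n" for n
  proof -
    have "0 \<le> (\<integral>\<omega>. Q n \<omega> \<partial>M)" by (rule integral_nonneg_AE) (simp add: nonneg)
    then show ?thesis using le[of n] by linarith
  qed
  have "(\<integral>\<^sup>+\<omega>. (\<Sum>n. ennreal (Q n \<omega>)) \<partial>M) = (\<Sum>n. \<integral>\<^sup>+\<omega>. ennreal (Q n \<omega>) \<partial>M)"
    by (rule nn_integral_suminf) simp
  also have "\<dots> \<le> (\<Sum>n. ennreal (b n))"
    using le int nonneg by (intro suminf_le summableI) (simp add: nn_integral_eq_integral ennreal_leI)
  also have "\<dots> = ennreal (\<Sum>n. b n)"
    by (rule suminf_ennreal2[OF b_nonneg summable])
  finally have "(\<integral>\<^sup>+\<omega>. (\<Sum>n. ennreal (Q n \<omega>)) \<partial>M) \<noteq> \<infinity>"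
    by (auto simp: top_unique)
  then have "AE \<omega> in M. (\<Sum>n. ennreal (Q n \<omega>)) \<noteq> \<infinity>"
    by (rule nn_integral_PInf_AE[rotated]) simp
  then show ?thesis
  proof (rule eventually_mono)
    fix \<omega> assume "(\<Sum>n. ennreal (Q n \<omega>)) \<noteq> \<infinity>"
    then have "summable (\<lambda>n. Q n \<omega>)" using summable_suminf_not_top[of "\<lambda>n. Q n \<omega>"] nonneg by simp
    then show "(\<lambda>n. Q n \<omega>) \<longlonglongrightarrow> 0" by (rule summable_LIMSEQ_zero)
  qed
qed

(* A process with E(X_a - X_b)^2 <= C (a - b)^gamma for some gamma > 1 has vanishing dyadic
   quadratic variation: the n-th variation has expectation <= C (t - s)^gamma (2^(1 - gamma))^n. *)
lemma dyadic_quadratic_variation_AE_zero: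
  fixes X :: "real \<Rightarrow> 'a \<Rightarrow> real" and C \<gamma> s t :: real
  assumes [measurable]: "\<And>u. X u \<in> borel_measurable M"
    and incr: "\<And>a b. b < a \<Longrightarrow> integrable M (\<lambda>\<omega>. (X a \<omega> - X b \<omega>)\<^sup>2) \<and>
        (\<integral>\<omega>. (X a \<omega> - X b \<omega>)\<^sup>2 \<partial>M) \<le> C * (a - b) powr \<gamma>"
    and "1 < \<gamma>" "s < t"
  shows "AE \<omega> in M. (\<lambda>n. \<Sum>j\<in>{1..(2::nat)^n}.
            (X (s + real j / 2^n * (t - s)) \<omega> - X (s + (real j - 1) / 2^n * (t - s)) \<omega>)\<^sup>2)
          \<longlonglongrightarrow> 0"
proof -
  define d where "d = t - s"
  have d: "0 < d" using \<open>s < t\<close> unfolding d_def by simp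
  define Q where "Q n \<omega> = (\<Sum>j\<in>{1..(2::nat)^n}.
    (X (s + real j / 2^n * (t - s)) \<omega> - X (s + (real j - 1) / 2^n * (t - s)) \<omega>)\<^sup>2)" for n \<omega>
  have step: "(s + real j / 2^n * (t - s)) - (s + (real j - 1) / 2^n * (t - s)) = d / 2 ^ n" for n j
    unfolding d_def by (simp add: field_simps)
  then have summand: "integrable M (\<lambda>\<omega>. (X (s + real j / 2^n * (t - s)) \<omega> - X (s + (real j - 1) / 2^n * (t - s)) \<omega>)\<^sup>2) \<and>
      (\<integral>\<omega>. (X (s + real j / 2^n * (t - s)) \<omega> - X (s + (real j - 1) / 2^n * (t - s)) \<omega>)\<^sup>2 \<partial>M)
        \<le> C * (d / 2 ^ n) powr \<gamma>" for n j
  proof -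
    have "0 < d / 2 ^ n" using d by simp
    then have "s + (real j - 1) / 2^n * (t - s) < s + real j / 2^n * (t - s)" using step[of j n] by linarith
    from incr[OF this] show ?thesis unfolding step .
  qed
  have "(\<integral>\<omega>. Q n \<omega> \<partial>M) \<le> C * d powr \<gamma> * (2 powr (1 - \<gamma>)) ^ n" for n
  proof -
    have "(\<integral>\<omega>. Q n \<omega> \<partial>M) = (\<Sum>j\<in>{1..(2::nat)^n}.
        \<integral>\<omega>. (X (s + real j / 2^n * (t - s)) \<omega> - X (s + (real j - 1) / 2^n * (t - s)) \<omega>)\<^sup>2 \<partial>M)"
      unfolding Q_def using summand by (intro Bochner_Integration.integral_sum) blast
    also have "\<dots> \<le> (\<Sum>j\<in>{1..(2::nat)^n}. C * (d / 2 ^ n) powr \<gamma>)"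
      using summand by (intro sum_mono) blast
    also have "\<dots> = C * (2 ^ n * (d / 2 ^ n) powr \<gamma>)" by simp
    finally show ?thesis unfolding dyadic_powr_sum[OF d] by (simp add: mult_ac)
  qed
  moreover have "summable (\<lambda>n. C * d powr \<gamma> * (2 powr (1 - \<gamma>)) ^ n)"
    using \<open>1 < \<gamma>\<close> by (intro summable_mult summable_geometric) (simp add: powr_less_one)
  moreover have "integrable M (Q n)" for n
    unfolding Q_def using summand by (intro Bochner_Integration.integrable_sum) blast
  moreover have "0 \<le> Q n \<omega>" for n \<omega>
    unfolding Q_def by (intro sum_nonneg) simp
  moreover have "Q n \<in> borel_measurable M" for n
    unfolding Q_def by measurable
  ultimately have "AE \<omega> in M. (\<lambda>n. Q n \<omega>) \<longlonglongrightarrow> 0"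
    by (intro AE_tendsto_zero_if_summable_integrals[where b="\<lambda>n. C * d powr \<gamma> * (2 powr (1 - \<gamma>)) ^ n"])
  then show ?thesis unfolding Q_def .
qed

theorem mainTheorem7:
  fixes M :: "'a measure" and L1 L2 X :: "real \<Rightarrow> 'a \<Rightarrow> real" and H s t :: real
  assumes "prob_space M"
    and "1/2 < H" and "H < 1"
    and "levy_process M L1" and "levy_process M L2"
    and "iid_processes M L1 L2"
    and "no_gaussian_component M (L1 1)"
    and "integrable M (\<lambda>\<omega>. (L1 1 \<omega>)\<^sup>2)"
    and "prob_space.expectation M (L1 1) = 0"
    and "\<forall>r. levy_integral M (two_sided L1 L2) (f_H H r) (X r)"
    and "s < t"
  shows "AE \<omega> in M. (\<lambda>n. \<Sum>j\<in>{1..(2::nat)^n}.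
            (X (s + real j / 2^n * (t - s)) \<omega> - X (s + (real j - 1) / 2^n * (t - s)) \<omega>)\<^sup>2)
          \<longlonglongrightarrow> 0"
proof (rule dyadic_quadratic_variation_AE_zero)
  interpret two_sided_levy M L1 L2
    by unfold_locales (use assms(4,5,6,8,9) in auto)
  show "X u \<in> borel_measurable M" for u
    using assms(10) unfolding levy_integral_def by blast
  show "integrable M (\<lambda>\<omega>. (X a \<omega> - X b \<omega>)\<^sup>2) \<and> (\<integral>\<omega>. (X a \<omega> - X b \<omega>)\<^sup>2 \<partial>M) \<le>
      9 * A.sigma2 * (\<integral>x. (f_H H 1 x - f_H H 0 x)\<^sup>2 \<partial>lborel) * (a - b) powr (2 * H)" if "b < a" for a b
    using fractional_levy_increment_bound[OF assms(10) that] by blast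
  show "1 < 2 * H" using assms(2) by simp
qed (fact assms(11))

end
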